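(* Let $A\in\mathbb{R}^{n\times n}$, $B\in\mathbb{R}^{n\times m}$ with $(A,B)$ controllable, $Q\in\mathbb{R}^{n\times n}$ symmetric positive definite, $R\in\mathbb{R}^{m\times m}$ symmetric positive definite, and let $P^*$ be the unique symmetric positive definite solution of $A^TP+PA-PBR^{-1}B^TP+Q=0$. Consider the robust policy iteration: start from a gain $\hat K_1\in\mathbb{R}^{m\times n}$ with $A-B\hat K_1$ Hurwitz and a sequence $(\Delta G_i)_{i\ge1}$ of symmetric $(n+m)\times(n+m)$ matrices; for $i=1,2,\dots$, as long as $A-B\hat K_i$ is Hurwitz, let $\tilde P_i$ be the unique symmetric solution of $$(A-B\hat K_i)^T\tilde P_i+\tilde P_i(A-B\hat K_i)+Q+\hat K_i^TR\hat K_i=0,$$ let $$\tilde G_i=\begin{bmatrix} Q+A^T\tilde P_i+\tilde P_iA & \tilde P_iB\\ B^T\tilde P_i & R\end{bmatrix},\qquad \hat G_i=\tilde G_i+\Delta G_i,$$ and, when the lower-right $m\times m$ block $\hat G_{i,22}$ is invertible, set $\hat K_{i+1}=\hat G_{i,22}^{-1}\hat G_{i,21}$, where $\hat G_{i,21}$ is the lower-left $m\times n$ block of $\hat G_i$. Let $\|\Delta G\|_\infty=\sup_{i\ge1}\|\Delta G_i\|_F$. Then for every stabilizing $\hat K_1$ and every $\epsilon>0$ there exist $\delta_2>0$ (depending on $\epsilon$ and $\hat K_1$) and $M_0>0$ such that, whenever $\|\Delta G\|_\infty<\delta_2$: for all integers $i\ge1$, $\hat G_{i,22}$ is invertible, $A-B\hat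 K_i$ is Hurwitz, and $\|\tilde P_i\|_F<M_0$; and $$\limsup_{i\to\infty}\|\tilde P_i-P^*\|_F<\epsilon.$$ If in addition $\lim_{i\to\infty}\|\Delta G_i\|_F=0$, then $\lim_{i\to\infty}\|\tilde P_i-P^*\|_F=0$.
   Context: $\|\cdot\|_F$ is the Frobenius norm; a square matrix is Hurwitz if all its eigenvalues have negative real part. $\tilde P_i$ is the cost matrix of the policy $u=-\hat K_ix$ for the LQR cost $\int_0^\infty x^TQx+u^TRu\,dt$ with dynamics $\dot x=Ax+Bu$, and $\Delta G_i$ is the error in the policy evaluation step of Kleinman's policy iteration. *)

theory Defs
  imports "HOL-Analysis.Analysis"
begin

text \<open>Matrices are HOL-Analysis matrices indexed by finite types: n = CARD('n), m = CARD('m).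
  (n+m)x(n+m) matrices are indexed by the sum type 'n + 'm (first the n-block, then the m-block).\<close>

definition frob :: "real^'c^'r \<Rightarrow> real" where
  "frob M = sqrt (\<Sum>i\<in>UNIV. \<Sum>j\<in>UNIV. (M $ i $ j)\<^sup>2)"

definition mpow :: "real^'n^'n \<Rightarrow> nat \<Rightarrow> real^'n^'n" where
  "mpow A k = ((\<lambda>M. A ** M) ^^ k) (mat 1)"

text \<open>Kalman rank condition: rank [B, AB, ..., A^(n-1) B] = n.\<close>
definition controllable :: "real^'n^'n \<Rightarrow> real^'m^'n \<Rightarrow> bool" where
  "controllable A B \<longleftrightarrow>
     span (\<Union>k<CARD('n). range (\<lambda>u. mpow A k *v (B *v u))) = UNIV"

definition cmat :: "real^'c^'r \<Rightarrow> complex^'c^'r" where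
  "cmat M = (\<chi> i j. complex_of_real (M $ i $ j))"

definition eigenvalue :: "real^'n^'n \<Rightarrow> complex \<Rightarrow> bool" where
  "eigenvalue M c \<longleftrightarrow> (\<exists>v::complex^'n. v \<noteq> 0 \<and> cmat M *v v = c *s v)"

definition hurwitz :: "real^'n^'n \<Rightarrow> bool" where
  "hurwitz M \<longleftrightarrow> (\<forall>c. eigenvalue M c \<longrightarrow> Re c < 0)"

definition symmetric_mat :: "real^'n^'n \<Rightarrow> bool" where
  "symmetric_mat M \<longleftrightarrow> transpose M = M"

definition pos_def :: "real^'n^'n \<Rightarrow> bool" where
  "pos_def M \<longleftrightarrow> symmetric_mat M \<and> (\<forall>x. x \<noteq> 0 \<longrightarrow> x \<bullet> (M *v x) > 0)"

definition Gtil :: "real^'n^'n \<Rightarrow> real^'m^'n \<Rightarrow> real^'n^'n \<Rightarrow> real^'m^'m \<Rightarrow> real^'n^'n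
    \<Rightarrow> real^('n::finite + 'm::finite)^('n + 'm)" where
  "Gtil A B Q R P = (\<chi> i j. case (i, j) of
      (Inl a, Inl b) \<Rightarrow> (Q + transpose A ** P + P ** A) $ a $ b
    | (Inl a, Inr b) \<Rightarrow> (P ** B) $ a $ b
    | (Inr a, Inl b) \<Rightarrow> (transpose B ** P) $ a $ b
    | (Inr a, Inr b) \<Rightarrow> R $ a $ b)"

definition blk22 :: "real^('n::finite + 'm::finite)^('n + 'm) \<Rightarrow> real^'m^'m" where
  "blk22 G = (\<chi> a b. G $ Inr a $ Inr b)"

definition blk21 :: "real^('n::finite + 'm::finite)^('n + 'm) \<Rightarrow> real^'n^'m" where
  "blk21 G = (\<chi> a b. G $ Inr a $ Inl b)"

end

theory Submission
  imports Defs "Jordan_Normal_Form.Spectral_Radius"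
begin

text \<open>Let \<open>V\<^sub>i = tr (P\<^sub>i - P\<^sup>*)\<close>. For the exact Kleinman gain \<open>R\<^sup>-\<^sup>1 B\<^sup>T P\<^sub>i\<close> two Lyapunov
  inequalities give a linear contraction of \<open>V\<^sub>i\<close>: the gap is bounded by the gain error,
  \<open>q V\<^sub>i \<le> \<parallel>R\<parallel> \<parallel>K\<^sub>i - R\<^sup>-\<^sup>1 B\<^sup>T P\<^sub>i\<parallel>\<^sup>2 tr P\<^sup>*\<close>, and the gain error is paid for by the decrease
  \<open>tr (P\<^sub>i - P\<^sub>i\<^sub>+\<^sub>1)\<close>. As long as \<open>P\<^sub>i\<close> stays bounded, the perturbation \<open>\<Delta>G\<^sub>i\<close> moves the new gain
  by \<open>O(\<parallel>\<Delta>G\<^sub>i\<parallel>)\<close>, which keeps it stabilising and costs \<open>O(\<parallel>\<Delta>G\<^sub>i\<parallel>\<^sup>2)\<close> in the recursion: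
  \<open>V\<^sub>i\<^sub>+\<^sub>1 \<le> a V\<^sub>i + c \<parallel>\<Delta>G\<^sub>i\<parallel>\<^sup>2\<close> with \<open>a < 1\<close> on a sublevel set \<open>V \<le> W\<close>, which small perturbations
  leave invariant. Hence \<open>limsup V\<^sub>i \<le> c sup \<parallel>\<Delta>G\<^sub>i\<parallel>\<^sup>2 / (1 - a)\<close>, \<open>V\<^sub>i \<rightarrow> 0\<close> when \<open>\<Delta>G\<^sub>i \<rightarrow> 0\<close>, and
  \<open>\<parallel>P\<^sub>i - P\<^sup>*\<parallel>\<^sub>F \<le> V\<^sub>i\<close>. The sign information on Lyapunov solutions for Hurwitz matrices comes from
  the Cayley transform, whose powers tend to zero.\<close>

no_notation Matrix.vec_index (infixl "$" 100)
no_notation Matrix.scalar_prod (infix "\<bullet>" 70)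
hide_const (open) Char_Poly.eigenvalue

abbreviation idm :: "'a::zero_neq_one^'n^'n" where "idm \<equiv> Finite_Cartesian_Product.mat 1"

section \<open>Matrix algebra\<close>

lemma matrix_add_rdistrib: "(B + C) ** A = B ** A + C ** (A::'a::semiring_1^_^_)"
  by (vector matrix_matrix_mult_def sum.distrib[symmetric] field_simps)

lemma matrix_diff_ldistrib: "A ** (B - C) = A ** B - A ** (C::'a::ring_1^_^_)"
  by (vector matrix_matrix_mult_def sum_subtractf[symmetric] field_simps)

lemma matrix_diff_rdistrib: "(B - C) ** A = B ** A - C ** (A::'a::ring_1^_^_)"
  by (vector matrix_matrix_mult_def sum_subtractf[symmetric] field_simps)

lemma matrix_neg_mult: "(- B) ** A = - (B ** (A::'a::ring_1^_^_))"
  by (vector matrix_matrix_mult_def sum_negf[symmetric])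

lemma matrix_mult_neg: "A ** (- B) = - (A ** (B::'a::ring_1^_^_))"
  by (vector matrix_matrix_mult_def sum_negf[symmetric])

lemma transpose_add: "transpose (A + B) = transpose A + transpose (B::'a::semiring_1^_^_)"
  by (simp add: transpose_def Finite_Cartesian_Product.vec_eq_iff)

lemma transpose_diff: "transpose (A - B) = transpose A - transpose (B::'a::ring_1^_^_)"
  by (simp add: transpose_def Finite_Cartesian_Product.vec_eq_iff)

lemma transpose_neg: "transpose (- A) = - transpose (A::'a::ring_1^_^_)"
  by (simp add: transpose_def Finite_Cartesian_Product.vec_eq_iff)

lemma scaleR_matrix_mult: "(c *\<^sub>R A) ** B = c *\<^sub>R (A ** (B::real^_^_))"
  by (simp add: scalar_matrix_assoc)

lemma matrix_mult_scaleR: "A ** (c *\<^sub>R B) = c *\<^sub>R (A ** (B::real^_^_))"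
  by (simp add: matrix_scalar_ac scalar_matrix_assoc)

lemmas matrix_ring_simps = matrix_add_ldistrib matrix_add_rdistrib matrix_diff_ldistrib
  matrix_diff_rdistrib matrix_neg_mult matrix_mult_neg transpose_add transpose_diff transpose_neg
  matrix_transpose_mul matrix_mul_assoc[symmetric] scaleR_matrix_mult matrix_mult_scaleR transpose_scalar

lemma symmetric_mat_add: "symmetric_mat X \<Longrightarrow> symmetric_mat Y \<Longrightarrow> symmetric_mat (X + Y)"
  unfolding symmetric_mat_def by (simp add: transpose_add)

lemma symmetric_mat_diff: "symmetric_mat X \<Longrightarrow> symmetric_mat Y \<Longrightarrow> symmetric_mat (X - Y)"
  unfolding symmetric_mat_def by (simp add: transpose_diff)

lemma symmetric_mat_scaleR: "symmetric_mat X \<Longrightarrow> symmetric_mat (c *\<^sub>R X)"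
  unfolding symmetric_mat_def by (simp add: transpose_scalar)

lemma inner_transpose_mult: "x \<bullet> (transpose A *v y) = (A *v x) \<bullet> (y::real^'m)"
proof -
  have "x \<bullet> (transpose A *v y) = (y v* A) \<bullet> x" by (simp add: inner_commute)
  also have "\<dots> = y \<bullet> (A *v x)" by (rule dot_lmul_matrix)
  finally show ?thesis by (simp add: inner_commute)
qed

lemma inner_symmetric_mat: "symmetric_mat P \<Longrightarrow> u \<bullet> (P *v v) = (P *v u) \<bullet> (v::real^'n)"
  unfolding symmetric_mat_def by (metis inner_transpose_mult)

lemma quad_form_add: "x \<bullet> ((A + B) *v x) = x \<bullet> (A *v x) + x \<bullet> (B *v (x::real^'n))"
  by (simp add: matrix_vector_mult_add_rdistrib inner_add_right)

lemma quad_form_diff: "x \<bullet> ((A - B) *v x) = x \<bullet> (A *v x) - x \<bullet> (B *v (x::real^'n))"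
  by (simp add: matrix_vector_mult_diff_rdistrib inner_diff_right)

lemma quad_form_neg: "x \<bullet> ((- A) *v x) = - (x \<bullet> (A *v (x::real^'n)))"
  by (simp add: matrix_vector_mult_def inner_vec_def sum_negf Finite_Cartesian_Product.vec_eq_iff)

lemma quad_form_scaleR: "x \<bullet> ((c *\<^sub>R A) *v x) = c * (x \<bullet> (A *v (x::real^'n)))"
  by (simp add: matrix_vector_mult_def inner_vec_def sum_distrib_left algebra_simps)

lemma quad_form_congruence:
  "x \<bullet> ((transpose K ** R ** K) *v x) = (K *v x) \<bullet> (R *v (K *v (x::real^'n)))"
  by (simp only: matrix_vector_mul_assoc[symmetric] inner_transpose_mult)

lemma cmat_mult: "cmat (A ** B) = cmat A ** cmat B"
  by (simp add: cmat_def matrix_matrix_mult_def Finite_Cartesian_Product.vec_eq_iff)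

lemma cmat_add: "cmat (A + B) = cmat A + cmat B"
  by (simp add: cmat_def Finite_Cartesian_Product.vec_eq_iff)

lemma cmat_diff: "cmat (A - B) = cmat A - cmat B"
  by (simp add: cmat_def Finite_Cartesian_Product.vec_eq_iff)

lemma cmat_idm: "cmat (idm::real^'n^'n) = idm"
  by (simp add: cmat_def Finite_Cartesian_Product.mat_def Finite_Cartesian_Product.vec_eq_iff)

lemma invertible_if_ker_trivial:
  fixes A :: "real^'n^'n"
  assumes "\<And>x. A *v x = 0 \<Longrightarrow> x = 0"
  shows "invertible A"
  using assms matrix_left_invertible_ker invertible_left_inverse by blast

lemma invertible_matrix_inv:
  fixes A :: "real^'n^'n"
  assumes "invertible A"
  shows "A ** matrix_inv A = idm" "matrix_inv A ** A = idm"
  using assms unfolding invertible_def matrix_inv_def by (metis (mono_tags, lifting) someI_ex)+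

section \<open>Matrices whose eigenvalues lie in the unit disc\<close>

lemma mpow_0 [simp]: "mpow S 0 = idm"
  and mpow_Suc [simp]: "mpow S (Suc k) = S ** mpow S k"
  by (simp_all add: mpow_def)

lemma mpow_Suc_right: "mpow S (Suc k) = mpow S k ** S"
proof (induction k)
  case (Suc k)
  have "mpow S (Suc (Suc k)) = S ** (mpow S k ** S)" by (simp only: mpow_Suc[of S "Suc k"] Suc.IH)
  also have "\<dots> = mpow S (Suc k) ** S" by (simp only: mpow_Suc matrix_mul_assoc)
  finally show ?case .
qed simp

lemma mpow_scaleR: "mpow (c *\<^sub>R S) k = c ^ k *\<^sub>R mpow S k"
  by (induction k) (simp_all add: scalar_matrix_assoc matrix_scalar_ac power_commutes)

text \<open>Transfer to the matrices of Jordan_Normal_Form along an enumeration \<open>h\<close> of the index type.\<close>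

definition to_jnf :: "(nat \<Rightarrow> 'n::finite) \<Rightarrow> real^'n^'n \<Rightarrow> complex Matrix.mat" where
  "to_jnf h S = Matrix.mat CARD('n) CARD('n) (\<lambda>(i, j). complex_of_real (S $ h i $ h j))"

lemma dim_to_jnf [simp]:
  "dim_row (to_jnf h (S::real^'n^'n)) = CARD('n)" "dim_col (to_jnf h S) = CARD('n)"
  by (simp_all add: to_jnf_def)

lemma to_jnf_carrier: "to_jnf h (S::real^'n^'n) \<in> carrier_mat CARD('n) CARD('n)"
  by (simp add: to_jnf_def)

lemma index_to_jnf [simp]:
  "i < CARD('n) \<Longrightarrow> j < CARD('n) \<Longrightarrow> to_jnf h (S::real^'n^'n) $$ (i, j) = complex_of_real (S $ h i $ h j)"
  by (simp add: to_jnf_def)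

lemma to_jnf_scaleR: "to_jnf h (c *\<^sub>R S) = complex_of_real c \<cdot>\<^sub>m to_jnf h (S::real^'n^'n)"
  by (rule eq_matI) (simp_all add: to_jnf_def)

context
  fixes h :: "nat \<Rightarrow> 'n::finite"
  assumes h: "bij_betw h {0..<CARD('n)} UNIV"
begin

lemma to_jnf_mult: "to_jnf h (S ** T) = to_jnf h S * to_jnf h (T::real^'n^'n)"
proof (rule eq_matI)
  fix i j assume "i < dim_row (to_jnf h S * to_jnf h T)" "j < dim_col (to_jnf h S * to_jnf h T)"
  then have i: "i < CARD('n)" and j: "j < CARD('n)" by (simp_all add: to_jnf_def)
  have "(to_jnf h S * to_jnf h T) $$ (i, j)
      = (\<Sum>k\<in>{0..<CARD('n)}. complex_of_real (S $ h i $ h k * T $ h k $ h j))"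
    using i j by (simp add: to_jnf_def scalar_prod_def row_def col_def)
  also have "\<dots> = (\<Sum>x\<in>UNIV. complex_of_real (S $ h i $ x * T $ x $ h j))"
    using sum.reindex_bij_betw[OF h, of "\<lambda>x. complex_of_real (S $ h i $ x * T $ x $ h j)"] by simp
  also have "\<dots> = to_jnf h (S ** T) $$ (i, j)"
    using i j by (simp add: matrix_matrix_mult_def)
  finally show "to_jnf h (S ** T) $$ (i, j) = (to_jnf h S * to_jnf h T) $$ (i, j)" by simp
qed (simp_all add: to_jnf_def)

lemma to_jnf_one: "to_jnf h (idm::real^'n^'n) = 1\<^sub>m CARD('n)"
proof (rule eq_matI)
  fix i j assume "i < dim_row (1\<^sub>m CARD('n))" "j < dim_col (1\<^sub>m CARD('n))"
  then have i: "i < CARD('n)" and j: "j < CARD('n)" by simp_all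
  have "h i = h j \<longleftrightarrow> i = j" using h i j unfolding bij_betw_def inj_on_def by auto
  then show "to_jnf h idm $$ (i, j) = 1\<^sub>m CARD('n) $$ (i, j)"
    using i j by (simp add: Finite_Cartesian_Product.mat_def)
qed (simp_all add: to_jnf_def)

lemma to_jnf_mpow: "to_jnf h (mpow S k) = to_jnf h (S::real^'n^'n) ^\<^sub>m k"
  by (induction k) (simp_all add: to_jnf_one to_jnf_mult mpow_Suc_right del: mpow_Suc)

lemma eigenvalue_if_to_jnf_eigenvalue:
  assumes "Char_Poly.eigenvalue (to_jnf h (S::real^'n^'n)) \<mu>"
  shows "eigenvalue S \<mu>"
proof -
  let ?n = "CARD('n)"
  from assms obtain v where v: "v \<in> carrier_vec ?n" "v \<noteq> 0\<^sub>v ?n" "to_jnf h S *\<^sub>v v = \<mu> \<cdot>\<^sub>v v"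
    unfolding Char_Poly.eigenvalue_def eigenvector_def by (auto simp: to_jnf_def)
  define g where "g = inv_into {0..<?n} h"
  have g_range: "g x < ?n" and h_g: "h (g x) = x" for x
    unfolding g_def using h by (metis atLeastLessThan_iff bij_betw_def inv_into_into f_inv_into_f UNIV_I)+
  have g_h: "i < ?n \<Longrightarrow> g (h i) = i" for i
    unfolding g_def using h by (simp add: bij_betw_def inv_into_f_f)
  define w :: "complex^'n" where "w = (\<chi> x. vec_index v (g x))"
  have "cmat S *v w = \<mu> *s w"
  proof (rule Finite_Cartesian_Product.vec_eq_iff[THEN iffD2], rule allI)
    fix x
    have "(cmat S *v w) $ x = (\<Sum>y\<in>UNIV. complex_of_real (S $ x $ y) * vec_index v (g y))"
      by (simp add: cmat_def w_def matrix_vector_mult_def)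
    also have "\<dots> = (\<Sum>k\<in>{0..<?n}. complex_of_real (S $ h (g x) $ h k) * vec_index v k)"
      using sum.reindex_bij_betw[OF h, of "\<lambda>y. complex_of_real (S $ x $ y) * vec_index v (g y)"]
      by (simp add: g_h h_g)
    also have "\<dots> = vec_index (to_jnf h S *\<^sub>v v) (g x)"
      using g_range v(1) by (simp add: Matrix.scalar_prod_def row_def)
    also have "\<dots> = (\<mu> *s w) $ x" using v(3) g_range v(1) by (simp add: w_def)
    finally show "(cmat S *v w) $ x = (\<mu> *s w) $ x" .
  qed
  moreover have "w \<noteq> 0"
  proof
    assume "w = 0"
    then have "vec_index v i = 0" if "i < ?n" for i
      using g_h[OF that] by (metis w_def vec_lambda_beta zero_index)
    then have "v = 0\<^sub>v ?n" using v(1) by (intro eq_vecI) auto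
    with v(2) show False ..
  qed
  ultimately show ?thesis unfolding Defs.eigenvalue_def by blast
qed

lemma spectral_radius_to_jnf_less_1:
  assumes "\<And>\<mu>. eigenvalue (S::real^'n^'n) \<mu> \<Longrightarrow> cmod \<mu> < 1"
  shows "spectral_radius (to_jnf h S) < 1"
proof -
  obtain \<mu> where "\<mu> \<in> Spectral_Radius.spectrum (to_jnf h S)" "spectral_radius (to_jnf h S) = cmod \<mu>"
    using spectral_radius_mem_max(1)[OF to_jnf_carrier zero_less_card_finite] by auto
  then show ?thesis
    using assms eigenvalue_if_to_jnf_eigenvalue unfolding Spectral_Radius.spectrum_def by auto
qed

lemma mpow_entries_bounded:
  assumes "spectral_radius (to_jnf h (S::real^'n^'n)) < 1"
  obtains c where "\<And>k x y. \<bar>mpow S k $ x $ y\<bar> \<le> c"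
proof -
  obtain c where c: "\<And>k. norm_bound (to_jnf h S ^\<^sub>m k) c"
    using spectral_radius_jnf_norm_bound_less_1_upper_triangular[OF to_jnf_carrier assms] by auto
  have "\<bar>mpow S k $ x $ y\<bar> \<le> c" for k x y
  proof -
    obtain i j where i: "i < CARD('n)" "x = h i" and j: "j < CARD('n)" "y = h j"
      using h unfolding bij_betw_def by (metis UNIV_I atLeastLessThan_iff imageE)
    have "norm ((to_jnf h S ^\<^sub>m k) $$ (i, j)) \<le> c"
      using c[of k] i j unfolding norm_bound_def by (simp add: to_jnf_def)
    then show ?thesis using i j by (simp add: to_jnf_mpow[symmetric])
  qed
  then show thesis by (rule that)
qed

end

lemma spectral_radius_smult_le:
  fixes A :: "complex Matrix.mat"
  assumes A: "A \<in> carrier_mat n n" and n: "0 < n" and l: "0 < l"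
  shows "spectral_radius (complex_of_real l \<cdot>\<^sub>m A) \<le> l * spectral_radius A"
proof -
  have lA: "complex_of_real l \<cdot>\<^sub>m A \<in> carrier_mat n n" using A by simp
  obtain \<mu> where \<mu>: "\<mu> \<in> Spectral_Radius.spectrum (complex_of_real l \<cdot>\<^sub>m A)"
    "spectral_radius (complex_of_real l \<cdot>\<^sub>m A) = cmod \<mu>"
    using spectral_radius_mem_max(1)[OF lA n] by auto
  then obtain v where v: "v \<in> carrier_vec n" "v \<noteq> 0\<^sub>v n" "(complex_of_real l \<cdot>\<^sub>m A) *\<^sub>v v = \<mu> \<cdot>\<^sub>v v"
    unfolding Spectral_Radius.spectrum_def Char_Poly.eigenvalue_def eigenvector_def using lA by auto
  have "A *\<^sub>v v = (\<mu> / complex_of_real l) \<cdot>\<^sub>v v"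
  proof (rule eq_vecI)
    fix i assume "i < dim_vec ((\<mu> / complex_of_real l) \<cdot>\<^sub>v v)"
    then have i: "i < n" using v(1) by simp
    have "complex_of_real l * vec_index (A *\<^sub>v v) i = \<mu> * vec_index v i"
      using arg_cong[OF v(3), of "\<lambda>w. vec_index w i"] i A v(1)
      by (simp add: Matrix.scalar_prod_def row_def sum_distrib_left mult.assoc)
    then show "vec_index (A *\<^sub>v v) i = vec_index ((\<mu> / complex_of_real l) \<cdot>\<^sub>v v) i"
      using i v(1) l by (simp add: field_simps)
  qed (use A v(1) in simp)
  then have "\<mu> / complex_of_real l \<in> Spectral_Radius.spectrum A"
    using A v unfolding Spectral_Radius.spectrum_def Char_Poly.eigenvalue_def eigenvector_def by auto
  then have "cmod (\<mu> / complex_of_real l) \<le> spectral_radius A"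
    using spectral_radius_mem_max(2)[OF A n] by auto
  then show ?thesis using \<mu>(2) l by (simp add: norm_divide field_simps)
qed

lemma mpow_entries_decay:
  fixes S :: "real^'n^'n"
  assumes "\<And>\<mu>. eigenvalue S \<mu> \<Longrightarrow> cmod \<mu> < 1"
  obtains c r where "0 \<le> r" "r < 1" "\<And>k x y. \<bar>mpow S k $ x $ y\<bar> \<le> c * r ^ k"
proof -
  obtain h :: "nat \<Rightarrow> 'n" where h: "bij_betw h {0..<CARD('n)} UNIV"
    using ex_bij_betw_nat_finite[of "UNIV::'n set"] by auto
  define \<rho> where "\<rho> = spectral_radius (to_jnf h S)"
  have "0 \<le> \<rho>"
    using spectral_radius_mem_max(1)[OF to_jnf_carrier[of h S] zero_less_card_finite]
    unfolding \<rho>_def by auto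
  moreover have "\<rho> < 1" unfolding \<rho>_def by (rule spectral_radius_to_jnf_less_1[OF h assms])
  ultimately have \<rho>: "0 \<le> \<rho>" "\<rho> < 1" .
  \<comment> \<open>Scaling by \<open>l > 1\<close> keeps the spectral radius below 1, so \<open>l ^ k * S ^ k\<close> stays bounded.\<close>
  define l where "l = 2 / (1 + \<rho>)"
  have l: "1 < l" "l * \<rho> < 1" using \<rho> by (simp_all add: l_def field_simps)
  have "spectral_radius (to_jnf h (l *\<^sub>R S)) \<le> l * \<rho>"
    unfolding to_jnf_scaleR \<rho>_def using l by (intro spectral_radius_smult_le[OF to_jnf_carrier]) simp_all
  with l have "spectral_radius (to_jnf h (l *\<^sub>R S)) < 1" by linarith
  then obtain c where c: "\<And>k x y. \<bar>mpow (l *\<^sub>R S) k $ x $ y\<bar> \<le> c"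
    using mpow_entries_bounded[OF h] by blast
  show thesis
  proof
    show "0 \<le> 1 / l" "1 / l < 1" using l by simp_all
    fix k x y
    have "l ^ k * \<bar>mpow S k $ x $ y\<bar> \<le> c"
      using c[of k x y] l by (simp add: mpow_scaleR abs_mult)
    then show "\<bar>mpow S k $ x $ y\<bar> \<le> c * (1 / l) ^ k"
      using l by (simp add: field_simps power_one_over)
  qed
qed

section \<open>Hurwitz matrices and Lyapunov equations\<close>

lemma eigenvalue_real_parts:
  fixes M :: "real^'n^'n"
  assumes "eigenvalue M c"
  obtains x y where "x \<noteq> 0 \<or> y \<noteq> 0"
    "M *v x = Re c *\<^sub>R x - Im c *\<^sub>R y" "M *v y = Im c *\<^sub>R x + Re c *\<^sub>R y"
proof -
  from assms obtain z where z: "z \<noteq> 0" "cmat M *v z = c *s z"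
    unfolding Defs.eigenvalue_def by auto
  define x where "x = (\<chi> i. Re (z $ i))"
  define y where "y = (\<chi> i. Im (z $ i))"
  have comp: "(\<Sum>j\<in>UNIV. complex_of_real (M $ i $ j) * z $ j) = c * z $ i" for i
    using arg_cong[OF z(2), of "\<lambda>v. v $ i"] by (simp add: cmat_def matrix_vector_mult_def)
  have "x \<noteq> 0 \<or> y \<noteq> 0"
    using z(1) by (auto simp: x_def y_def Finite_Cartesian_Product.vec_eq_iff complex_eq_iff)
  moreover have "M *v x = Re c *\<^sub>R x - Im c *\<^sub>R y"
  proof (rule Finite_Cartesian_Product.vec_eq_iff[THEN iffD2], rule allI)
    fix i
    have "Re (\<Sum>j\<in>UNIV. complex_of_real (M $ i $ j) * z $ j) = Re (c * z $ i)" using comp[of i] by simp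
    then show "(M *v x) $ i = (Re c *\<^sub>R x - Im c *\<^sub>R y) $ i"
      by (simp add: matrix_vector_mult_def x_def y_def Re_sum)
  qed
  moreover have "M *v y = Im c *\<^sub>R x + Re c *\<^sub>R y"
  proof (rule Finite_Cartesian_Product.vec_eq_iff[THEN iffD2], rule allI)
    fix i
    have "Im (\<Sum>j\<in>UNIV. complex_of_real (M $ i $ j) * z $ j) = Im (c * z $ i)" using comp[of i] by simp
    then show "(M *v y) $ i = (Im c *\<^sub>R x + Re c *\<^sub>R y) $ i"
      by (simp add: matrix_vector_mult_def x_def y_def Im_sum algebra_simps)
  qed
  ultimately show thesis by (rule that)
qed

lemma hurwitz_invertible_idm_minus:
  fixes M :: "real^'n^'n"
  assumes "hurwitz M"
  shows "invertible (idm - M)"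
proof (rule invertible_if_ker_trivial, rule ccontr)
  fix x :: "real^'n" assume x: "(idm - M) *v x = 0" "x \<noteq> 0"
  define z :: "complex^'n" where "z = (\<chi> i. complex_of_real (x $ i))"
  have "M *v x = x" using x(1) by (simp add: matrix_vector_mult_diff_rdistrib)
  moreover have "cmat M *v z = (\<chi> i. complex_of_real ((M *v x) $ i))"
    by (simp add: cmat_def z_def matrix_vector_mult_def Finite_Cartesian_Product.vec_eq_iff)
  ultimately have "cmat M *v z = 1 *s z" by (simp add: z_def)
  moreover have "z \<noteq> 0" using x(2) by (simp add: z_def Finite_Cartesian_Product.vec_eq_iff)
  ultimately have "eigenvalue M 1" unfolding Defs.eigenvalue_def by blast
  with assms show False unfolding hurwitz_def by fastforce
qed

definition cayley :: "real^'n^'n \<Rightarrow> real^'n^'n" where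
  "cayley M = (idm + M) ** matrix_inv (idm - M)"

lemma Re_cayley_inverse_neg_imp_norm_less_1:
  assumes "Re ((\<mu> - 1) / (\<mu> + 1)) < 0"
  shows "cmod \<mu> < 1"
proof -
  have "Re ((\<mu> - 1) / (\<mu> + 1)) = ((Re \<mu>)\<^sup>2 + (Im \<mu>)\<^sup>2 - 1) / ((Re \<mu> + 1)\<^sup>2 + (Im \<mu>)\<^sup>2)"
    by (simp add: Re_divide power2_eq_square algebra_simps)
  with assms have "(Re \<mu>)\<^sup>2 + (Im \<mu>)\<^sup>2 < 1"
    by (smt (verit, ccfv_threshold) divide_nonneg_nonneg zero_le_power2)
  then show ?thesis unfolding cmod_def by (simp add: real_sqrt_lt_1_iff)
qed

lemma eigenvalue_cayley_norm_less_1: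
  fixes M :: "real^'n^'n"
  assumes hM: "hurwitz M" and ev: "eigenvalue (cayley M) \<mu>"
  shows "cmod \<mu> < 1"
proof -
  define N where "N = matrix_inv (idm - M)"
  note NI = invertible_matrix_inv[OF hurwitz_invertible_idm_minus[OF hM], folded N_def]
  from ev obtain z where z: "z \<noteq> 0" "cmat ((idm + M) ** N) *v z = \<mu> *s z"
    unfolding Defs.eigenvalue_def cayley_def N_def by auto
  define u where "u = cmat N *v z"
  define y where "y = cmat M *v u"
  have "cmat (idm - M) *v u = z"
    unfolding u_def matrix_vector_mul_assoc cmat_mult[symmetric] NI(1) cmat_idm by simp
  then have zu: "z = u - y" unfolding y_def by (simp add: cmat_diff cmat_idm matrix_vector_mult_diff_rdistrib)
  have u0: "u \<noteq> 0" using zu z(1) unfolding y_def by auto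
  have "cmat (idm + M) *v u = \<mu> *s z"
    using z(2) unfolding u_def matrix_vector_mul_assoc cmat_mult .
  then have uy: "u + y = \<mu> *s (u - y)"
    unfolding y_def zu[unfolded y_def] by (simp add: cmat_add cmat_idm matrix_vector_mult_add_rdistrib)
  have eq: "u $ i + y $ i = \<mu> * (u $ i - y $ i)" for i
    using uy by (simp add: Finite_Cartesian_Product.vec_eq_iff right_diff_distrib)
  have "\<mu> + 1 \<noteq> 0"
  proof
    assume "\<mu> + 1 = 0"
    then have "u $ i = 0" for i using eq[of i] by (simp add: add_eq_0_iff2)
    with u0 show False by (simp add: Finite_Cartesian_Product.vec_eq_iff)
  qed
  \<comment> \<open>Inverting the Cayley transform: \<open>(\<mu> - 1) / (\<mu> + 1)\<close> is an eigenvalue of \<open>M\<close>.\<close>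
  then have "y $ i = ((\<mu> - 1) / (\<mu> + 1)) * u $ i" for i
    using eq[of i] by (simp add: field_simps)
  then have "cmat M *v u = ((\<mu> - 1) / (\<mu> + 1)) *s u"
    unfolding y_def by (simp add: Finite_Cartesian_Product.vec_eq_iff)
  with u0 have "eigenvalue M ((\<mu> - 1) / (\<mu> + 1))" unfolding Defs.eigenvalue_def by blast
  with hM show ?thesis unfolding hurwitz_def by (blast intro: Re_cayley_inverse_neg_imp_norm_less_1)
qed

lemma mpow_tendsto_zero:
  fixes S :: "real^'n^'n"
  assumes "\<And>\<mu>. eigenvalue S \<mu> \<Longrightarrow> cmod \<mu> < 1"
  shows "(\<lambda>k. mpow S k *v w) \<longlonglongrightarrow> 0"
proof (rule vec_tendstoI)
  fix i
  obtain r c where r: "0 \<le> r" "r < 1" and c: "\<And>k x y. \<bar>mpow S k $ x $ y\<bar> \<le> c * r ^ k"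
    using mpow_entries_decay[OF assms] by metis
  define C where "C = c * (\<Sum>j\<in>UNIV. \<bar>w $ j\<bar>)"
  have bound: "\<bar>(mpow S k *v w) $ i\<bar> \<le> C * r ^ k" for k
  proof -
    have "\<bar>(mpow S k *v w) $ i\<bar> \<le> (\<Sum>j\<in>UNIV. \<bar>mpow S k $ i $ j\<bar> * \<bar>w $ j\<bar>)"
      by (simp add: matrix_vector_mult_def abs_mult[symmetric] sum_abs)
    also have "\<dots> \<le> (\<Sum>j\<in>UNIV. c * r ^ k * \<bar>w $ j\<bar>)"
      by (intro sum_mono mult_right_mono c) simp
    finally show ?thesis by (simp add: C_def sum_distrib_left mult_ac)
  qed
  have lim: "(\<lambda>k. C * r ^ k) \<longlonglongrightarrow> 0"
    using tendsto_mult_right_zero[OF LIMSEQ_power_zero[of r], of C] r by (simp add: mult.commute)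
  have "(\<lambda>k. \<bar>(mpow S k *v w) $ i\<bar>) \<longlonglongrightarrow> 0"
    by (rule tendsto_sandwich[of "\<lambda>_. 0" _ _ "\<lambda>k. C * r ^ k"]) (simp_all add: bound lim)
  then show "(\<lambda>k. (mpow S k *v w) $ i) \<longlonglongrightarrow> 0 $ i" by (simp add: tendsto_rabs_zero_iff)
qed

definition pos_semidef :: "real^'n^'n \<Rightarrow> bool" where
  "pos_semidef M \<longleftrightarrow> (\<forall>x. 0 \<le> x \<bullet> (M *v x))"

definition lyapunov :: "real^'n^'n \<Rightarrow> real^'n^'n \<Rightarrow> real^'n^'n \<Rightarrow> bool" where
  "lyapunov M X C \<longleftrightarrow> transpose M ** X + X ** M + C = 0"

lemma lyapunov_quad_form:
  "lyapunov M X C \<Longrightarrow> x \<bullet> ((transpose M ** X + X ** M) *v x) = - (x \<bullet> (C *v x))"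
  unfolding lyapunov_def by (metis add.commute eq_neg_iff_add_eq_0 quad_form_neg)

lemma lyapunov_add:
  assumes "lyapunov M X1 C1" "lyapunov M X2 C2"
  shows "lyapunov M (X1 + X2) (C1 + C2)"
proof -
  have "transpose M ** (X1 + X2) + (X1 + X2) ** M + (C1 + C2)
      = (transpose M ** X1 + X1 ** M + C1) + (transpose M ** X2 + X2 ** M + C2)"
    by (simp add: matrix_add_ldistrib matrix_add_rdistrib algebra_simps)
  with assms show ?thesis unfolding lyapunov_def by simp
qed

lemma lyapunov_diff:
  assumes "lyapunov M X1 C1" "lyapunov M X2 C2"
  shows "lyapunov M (X1 - X2) (C1 - C2)"
proof -
  have "transpose M ** (X1 - X2) + (X1 - X2) ** M + (C1 - C2)
      = (transpose M ** X1 + X1 ** M + C1) - (transpose M ** X2 + X2 ** M + C2)"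
    by (simp add: matrix_diff_ldistrib matrix_diff_rdistrib algebra_simps)
  with assms show ?thesis unfolding lyapunov_def by simp
qed

lemma lyapunov_scaleR:
  assumes "lyapunov M X C"
  shows "lyapunov M (c *\<^sub>R X) (c *\<^sub>R C)"
proof -
  have "transpose M ** (c *\<^sub>R X) + (c *\<^sub>R X) ** M + c *\<^sub>R C = c *\<^sub>R (transpose M ** X + X ** M + C)"
    by (simp add: scaleR_matrix_mult matrix_mult_scaleR scaleR_add_right)
  with assms show ?thesis unfolding lyapunov_def by simp
qed

text \<open>With \<open>w = (I - M) u\<close> one has \<open>cayley M w = (I + M) u\<close>, and the quadratic form of \<open>X\<close>
  drops by \<open>2 u\<^sup>T C u\<close> along this step.\<close>

lemma lyapunov_cayley_decrease:
  fixes M X C :: "real^'n^'n"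
  assumes inv: "invertible (idm - M)" and L: "lyapunov M X C" and C: "pos_semidef C"
  shows "(cayley M *v w) \<bullet> (X *v (cayley M *v w)) \<le> w \<bullet> (X *v w)"
proof -
  define u where "u = matrix_inv (idm - M) *v w"
  define b where "b = M *v u"
  have w: "w = u - b"
    using invertible_matrix_inv(1)[OF inv] unfolding u_def b_def
    by (metis matrix_vector_mul_assoc matrix_vector_mul_lid matrix_vector_mult_diff_rdistrib)
  have Sw: "cayley M *v w = u + b"
    unfolding cayley_def u_def b_def
    by (simp add: matrix_vector_mul_assoc[symmetric] matrix_vector_mult_add_rdistrib)
  have "u \<bullet> ((transpose M ** X + X ** M) *v u) = b \<bullet> (X *v u) + u \<bullet> (X *v b)"
    unfolding b_def quad_form_add matrix_vector_mul_assoc[symmetric] inner_transpose_mult ..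
  then have Cu: "u \<bullet> (C *v u) = - (b \<bullet> (X *v u) + u \<bullet> (X *v b))"
    using lyapunov_quad_form[OF L, of u] by simp
  have "(u - b) \<bullet> (X *v (u - b)) - (u + b) \<bullet> (X *v (u + b)) = 2 * (u \<bullet> (C *v u))"
    unfolding Cu
    by (simp add: matrix_vector_right_distrib matrix_vector_mult_diff_distrib inner_add_left
        inner_add_right inner_diff_left inner_diff_right)
  moreover have "0 \<le> u \<bullet> (C *v u)" using C unfolding pos_semidef_def ..
  ultimately show ?thesis by (simp flip: w Sw)
qed

lemma lyapunov_pos_semidef:
  fixes M X C :: "real^'n^'n"
  assumes hM: "hurwitz M" and L: "lyapunov M X C" and C: "pos_semidef C"
  shows "pos_semidef X"
  unfolding pos_semidef_def
proof
  fix w :: "real^'n"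
  define q where "q v = v \<bullet> (X *v v)" for v
  have mono: "q (mpow (cayley M) k *v w) \<le> q w" for k
  proof (induction k)
    case (Suc k)
    have "q (mpow (cayley M) (Suc k) *v w) = q (cayley M *v (mpow (cayley M) k *v w))"
      by (simp add: matrix_vector_mul_assoc)
    also have "\<dots> \<le> q (mpow (cayley M) k *v w)"
      unfolding q_def by (rule lyapunov_cayley_decrease[OF hurwitz_invertible_idm_minus[OF hM] L C])
    finally show ?case using Suc.IH by linarith
  qed (simp add: q_def)
  have "(\<lambda>k. mpow (cayley M) k *v w) \<longlonglongrightarrow> 0"
    by (rule mpow_tendsto_zero[OF eigenvalue_cayley_norm_less_1[OF hM]])
  then have "(\<lambda>k. q (mpow (cayley M) k *v w)) \<longlonglongrightarrow> q 0"
    unfolding q_def by (intro tendsto_inner bounded_linear.tendsto[OF matrix_vector_mul_bounded_linear])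
  then have "q 0 \<le> q w" by (rule LIMSEQ_le_const2) (use mono in auto)
  then show "0 \<le> w \<bullet> (X *v w)" by (simp add: q_def)
qed

lemma lyapunov_hurwitz:
  fixes M P :: "real^'n^'n"
  assumes sP: "symmetric_mat P" and pP: "\<And>x. x \<noteq> 0 \<Longrightarrow> 0 < x \<bullet> (P *v x)"
    and neg: "\<And>x. x \<noteq> 0 \<Longrightarrow> x \<bullet> ((transpose M ** P + P ** M) *v x) < 0"
  shows "hurwitz M"
  unfolding hurwitz_def
proof (intro allI impI)
  fix c assume "eigenvalue M c"
  then obtain x y where xy: "x \<noteq> 0 \<or> y \<noteq> 0"
    and Mx: "M *v x = Re c *\<^sub>R x - Im c *\<^sub>R y" and My: "M *v y = Im c *\<^sub>R x + Re c *\<^sub>R y"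
    by (rule eigenvalue_real_parts)
  let ?L = "transpose M ** P + P ** M"
  have L: "v \<bullet> (?L *v v) = 2 * ((M *v v) \<bullet> (P *v v))" for v
  proof -
    have "v \<bullet> ((transpose M ** P) *v v) = (M *v v) \<bullet> (P *v v)"
      by (simp only: matrix_vector_mul_assoc[symmetric] inner_transpose_mult)
    moreover have "v \<bullet> ((P ** M) *v v) = (P *v v) \<bullet> (M *v v)"
      unfolding matrix_vector_mul_assoc[symmetric] by (rule inner_symmetric_mat[OF sP])
    ultimately show ?thesis by (simp add: quad_form_add inner_commute)
  qed
  have Pxy: "y \<bullet> (P *v x) = x \<bullet> (P *v y)"
    using inner_symmetric_mat[OF sP, of y x] by (simp add: inner_commute)
  \<comment> \<open>The real and imaginary parts of an eigenvector together see the factor \<open>2 Re c\<close>.\<close>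
  have "x \<bullet> (?L *v x) + y \<bullet> (?L *v y) = 2 * Re c * (x \<bullet> (P *v x) + y \<bullet> (P *v y))"
    unfolding L Mx My by (simp add: inner_diff_left inner_add_left Pxy algebra_simps)
  moreover have "x \<bullet> (?L *v x) + y \<bullet> (?L *v y) < 0"
    using xy neg[of x] neg[of y] by (cases "x = 0"; cases "y = 0") auto
  moreover have "0 < x \<bullet> (P *v x) + y \<bullet> (P *v y)"
    using xy pP[of x] pP[of y] by (cases "x = 0"; cases "y = 0") auto
  ultimately show "Re c < 0" by (simp add: mult_less_0_iff)
qed

section \<open>Frobenius norm and trace\<close>

lemma norm_matrix_sq_rows: "norm (M::real^'n^'m) ^ 2 = (\<Sum>i\<in>UNIV. norm (M $ i) ^ 2)"
  by (simp add: power2_norm_eq_inner inner_vec_def)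

lemma norm_vec_sq: "norm (x::real^'n) ^ 2 = (\<Sum>i\<in>UNIV. (x $ i)\<^sup>2)"
  unfolding power2_norm_eq_inner inner_vec_def by (simp add: power2_eq_square)

lemma norm_matrix_sq: "norm (M::real^'n^'m) ^ 2 = (\<Sum>i\<in>UNIV. \<Sum>j\<in>UNIV. (M $ i $ j)\<^sup>2)"
  by (simp add: norm_matrix_sq_rows norm_vec_sq)

lemma norm_matrix_sq_columns: "(\<Sum>j\<in>UNIV. norm ((M::real^'n^'m) *v axis j 1) ^ 2) = norm M ^ 2"
proof -
  have "(\<Sum>j\<in>UNIV. norm (M *v axis j 1) ^ 2) = (\<Sum>j\<in>UNIV. \<Sum>i\<in>UNIV. (M $ i $ j)\<^sup>2)"
    by (simp add: norm_vec_sq matrix_vector_mult_basis column_def)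
  also have "\<dots> = norm M ^ 2" unfolding norm_matrix_sq by (rule sum.swap)
  finally show ?thesis .
qed

lemma frob_eq_norm: "frob M = norm M"
  unfolding frob_def norm_matrix_sq[symmetric] by simp

lemma norm_matrix_vector_mult_le: "norm (A *v x) \<le> norm (A::real^'n^'m) * norm x"
proof -
  have "norm (A *v x) ^ 2 = (\<Sum>i\<in>UNIV. (A $ i \<bullet> x)\<^sup>2)"
    by (simp add: norm_vec_sq matrix_vector_mul_component)
  also have "\<dots> \<le> (\<Sum>i\<in>UNIV. (norm (A $ i) * norm x)\<^sup>2)"
    by (intro sum_mono) (metis Cauchy_Schwarz_ineq2 abs_ge_zero power2_abs power_mono)
  also have "\<dots> = (norm A * norm x) ^ 2"
    by (simp add: power_mult_distrib sum_distrib_right[symmetric] norm_matrix_sq_rows[of A])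
  finally show ?thesis by (rule power2_le_imp_le) simp
qed

lemma norm_transpose: "norm (transpose (A::real^'n^'m)) = norm A"
proof -
  have "norm (transpose A) ^ 2 = norm A ^ 2"
    unfolding norm_matrix_sq by (simp add: transpose_def) (rule sum.swap)
  then show ?thesis by (simp add: power2_eq_iff_nonneg)
qed

lemma norm_matrix_mult_le: "norm (A ** B) \<le> norm (A::real^'n^'m) * norm (B::real^'p^'n)"
proof -
  have row: "(A ** B) $ i = transpose B *v (A $ i)" for i
    by (simp add: matrix_matrix_mult_def matrix_vector_mult_def transpose_def
        Finite_Cartesian_Product.vec_eq_iff mult.commute)
  have "norm (A ** B) ^ 2 = (\<Sum>i\<in>UNIV. norm ((A ** B) $ i) ^ 2)"
    by (rule norm_matrix_sq_rows)
  also have "\<dots> \<le> (\<Sum>i\<in>UNIV. (norm B * norm (A $ i)) ^ 2)"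
    unfolding row
    by (intro sum_mono power_mono) (use norm_matrix_vector_mult_le[of "transpose B"] in
        \<open>simp_all add: norm_transpose\<close>)
  also have "\<dots> = (norm A * norm B) ^ 2"
    by (simp add: power_mult_distrib sum_distrib_left[symmetric] norm_matrix_sq_rows[of A] mult.commute)
  finally show ?thesis by (rule power2_le_imp_le) simp
qed

lemma abs_quad_form_le: "\<bar>x \<bullet> (M *v x)\<bar> \<le> norm (M::real^'n^'n) * norm x ^ 2"
proof -
  have "\<bar>x \<bullet> (M *v x)\<bar> \<le> norm x * norm (M *v x)" by (rule Cauchy_Schwarz_ineq2)
  also have "\<dots> \<le> norm x * (norm M * norm x)" by (intro mult_left_mono norm_matrix_vector_mult_le) simp
  finally show ?thesis by (simp add: power2_eq_square mult_ac)
qed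

lemma quad_form_congruence_le:
  fixes K :: "real^'n^'m" and R :: "real^'m^'m"
  shows "x \<bullet> ((transpose K ** R ** K) *v x) \<le> norm R * norm K ^ 2 * norm x ^ 2"
proof -
  have "x \<bullet> ((transpose K ** R ** K) *v x) \<le> norm R * norm (K *v x) ^ 2"
    unfolding quad_form_congruence using abs_quad_form_le[of "K *v x" R] by simp
  also have "\<dots> \<le> norm R * (norm K * norm x) ^ 2"
    by (intro mult_left_mono power_mono norm_matrix_vector_mult_le) simp_all
  finally show ?thesis by (simp add: power_mult_distrib mult_ac)
qed

lemma norm_submatrix_le:
  fixes G :: "real^'c^'r" and r :: "'a::finite \<Rightarrow> 'r" and s :: "'b::finite \<Rightarrow> 'c"
  assumes r: "inj r" and s: "inj s"
  shows "norm ((\<chi> a b. G $ r a $ s b) :: real^'b^'a) \<le> norm G"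
proof -
  have reindex_le: "(\<Sum>a\<in>UNIV. f (g a)) \<le> (\<Sum>i\<in>UNIV. f i)"
    if "inj g" "\<And>i. 0 \<le> f i" for f :: "'d::finite \<Rightarrow> real" and g :: "'e::finite \<Rightarrow> 'd"
    using that by (simp add: sum.reindex[symmetric, unfolded comp_def] sum_mono2)
  have "norm ((\<chi> a b. G $ r a $ s b) :: real^'b^'a) ^ 2 = (\<Sum>a\<in>UNIV. \<Sum>b\<in>UNIV. (G $ r a $ s b)\<^sup>2)"
    by (simp add: norm_matrix_sq)
  also have "\<dots> \<le> (\<Sum>a\<in>UNIV. \<Sum>j\<in>UNIV. (G $ r a $ j)\<^sup>2)"
    by (intro sum_mono reindex_le[OF s]) simp
  also have "\<dots> \<le> (\<Sum>i\<in>UNIV. \<Sum>j\<in>UNIV. (G $ i $ j)\<^sup>2)"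
    by (intro reindex_le[OF r] sum_nonneg) simp
  finally show ?thesis unfolding norm_matrix_sq[symmetric] by (rule power2_le_imp_le) simp
qed

lemma norm_blk22_le: "norm (blk22 G) \<le> norm G"
  unfolding blk22_def by (rule norm_submatrix_le) simp_all

lemma norm_blk21_le: "norm (blk21 G) \<le> norm G"
  unfolding blk21_def by (rule norm_submatrix_le) simp_all

lemma blk22_Gtil_add: "blk22 (Gtil A B Q R P + D) = R + blk22 D"
  by (simp add: blk22_def Gtil_def Finite_Cartesian_Product.vec_eq_iff)

lemma blk21_Gtil_add: "blk21 (Gtil A B Q R P + D) = transpose B ** P + blk21 D"
  by (simp add: blk21_def Gtil_def Finite_Cartesian_Product.vec_eq_iff)

lemma trace_quad_form: "trace (M::real^'n^'n) = (\<Sum>j\<in>UNIV. axis j 1 \<bullet> (M *v axis j 1))"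
  by (simp add: trace_def inner_axis' matrix_vector_mult_basis column_def)

lemma norm_sq_le_trace_if_quad_form_ge:
  fixes a :: "real^'n^'m" and C :: "real^'n^'n"
  assumes "\<And>x. c * norm (a *v x) ^ 2 \<le> x \<bullet> (C *v x)"
  shows "c * norm a ^ 2 \<le> trace C"
proof -
  have "c * norm a ^ 2 = (\<Sum>j\<in>UNIV. c * norm (a *v axis j 1) ^ 2)"
    by (simp add: sum_distrib_left[symmetric] norm_matrix_sq_columns)
  also have "\<dots> \<le> trace C" unfolding trace_quad_form by (intro sum_mono assms)
  finally show ?thesis .
qed

lemma trace_scaleR: "trace (c *\<^sub>R M) = c * trace (M::real^'n^'n)"
  by (simp add: trace_def sum_distrib_left)

lemma abs_trace_mult_le: "\<bar>trace (Z ** M)\<bar> \<le> norm (Z::real^'n^'n) * norm (M::real^'n^'n)"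
proof -
  have "trace (Z ** M) = Z \<bullet> transpose M"
    by (simp add: trace_def matrix_matrix_mult_def inner_vec_def transpose_def)
  also have "\<bar>\<dots>\<bar> \<le> norm Z * norm (transpose M)" by (rule Cauchy_Schwarz_ineq2)
  finally show ?thesis by (simp add: norm_transpose)
qed

lemma pos_semidef_trace_nonneg: "pos_semidef M \<Longrightarrow> 0 \<le> trace M"
  unfolding trace_quad_form pos_semidef_def by (simp add: sum_nonneg)

lemma pos_semidef_trace_mono: "pos_semidef (Y - X) \<Longrightarrow> trace X \<le> trace Y"
  using pos_semidef_trace_nonneg[of "Y - X"] by (simp add: trace_sub)

lemma quadratic_nonneg_discriminant:
  fixes a b c :: real
  assumes nonneg: "\<And>t. 0 \<le> a * t\<^sup>2 + 2 * b * t + c" and a: "0 \<le> a"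
  shows "b\<^sup>2 \<le> a * c"
proof (cases "a = 0")
  case True
  show ?thesis
  proof (cases "b = 0")
    case False
    have "0 \<le> a * (-(c + 1) / (2 * b))\<^sup>2 + 2 * b * (-(c + 1) / (2 * b)) + c" by (rule nonneg)
    with True False show ?thesis by (simp add: field_simps)
  qed (use True nonneg[of 0] in simp)
next
  case False
  with a have a: "0 < a" by simp
  have "0 \<le> a * (- b / a)\<^sup>2 + 2 * b * (- b / a) + c" by (rule nonneg)
  then have "0 \<le> (c * a - b\<^sup>2) / a" using a by (simp add: field_simps power2_eq_square)
  then show ?thesis using a by (simp add: zero_le_divide_iff mult.commute)
qed

lemma pos_semidef_entry_sq_le:
  fixes D :: "real^'n^'n"
  assumes s: "symmetric_mat D" and p: "pos_semidef D"
  shows "(D $ i $ j)\<^sup>2 \<le> D $ i $ i * D $ j $ j"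
proof (rule quadratic_nonneg_discriminant)
  have axis: "axis k 1 \<bullet> (D *v axis l 1) = D $ k $ l" for k l
    by (simp add: inner_axis' matrix_vector_mult_basis column_def)
  have "D $ j $ i = D $ i $ j" using s unfolding symmetric_mat_def by (metis transpose_def vec_lambda_beta)
  then have "(t *\<^sub>R axis i 1 + axis j 1) \<bullet> (D *v (t *\<^sub>R axis i 1 + axis j 1))
      = D $ i $ i * t\<^sup>2 + 2 * D $ i $ j * t + D $ j $ j" for t
    by (simp add: matrix_vector_right_distrib matrix_vector_mult_scaleR inner_add_left inner_add_right
        axis power2_eq_square algebra_simps)
  moreover have "0 \<le> (t *\<^sub>R axis i 1 + axis j 1) \<bullet> (D *v (t *\<^sub>R axis i 1 + axis j 1))" for t
    using p unfolding pos_semidef_def ..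
  ultimately show "0 \<le> D $ i $ i * t\<^sup>2 + 2 * D $ i $ j * t + D $ j $ j" for t
    by simp
  show "0 \<le> D $ i $ i" using p unfolding pos_semidef_def axis[symmetric] ..
qed

lemma pos_semidef_norm_le_trace:
  fixes D :: "real^'n^'n"
  assumes s: "symmetric_mat D" and p: "pos_semidef D"
  shows "norm D \<le> trace D"
proof -
  have "norm D ^ 2 = (\<Sum>i\<in>UNIV. \<Sum>j\<in>UNIV. (D $ i $ j)\<^sup>2)" by (rule norm_matrix_sq)
  also have "\<dots> \<le> (\<Sum>i\<in>UNIV. \<Sum>j\<in>UNIV. D $ i $ i * D $ j $ j)"
    by (intro sum_mono pos_semidef_entry_sq_le[OF s p])
  also have "\<dots> = trace D ^ 2"
    by (simp only: trace_def power2_eq_square sum_product)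
  finally show ?thesis using pos_semidef_trace_nonneg[OF p] by (rule power2_le_imp_le)
qed

lemma lyapunov_trace_le:
  assumes sZ: "symmetric_mat Z" and pZ: "pos_semidef Z" and L: "lyapunov M Z C"
  shows "trace C \<le> 2 * trace Z * norm M"
proof -
  have "trace (transpose M ** Z) = trace (transpose (transpose Z ** M))"
    by (simp add: matrix_transpose_mul)
  also have "\<dots> = trace (Z ** M)"
    using sZ unfolding symmetric_mat_def by (simp add: trace_def transpose_def)
  finally have "trace C = - 2 * trace (Z ** M)"
    using arg_cong[OF L[unfolded lyapunov_def], of trace] by (simp add: trace_add trace_def)
  also have "\<dots> \<le> 2 * (norm Z * norm M)" using abs_trace_mult_le[of Z M] by linarith
  also have "\<dots> \<le> 2 * (trace Z * norm M)"
    using pos_semidef_norm_le_trace[OF sZ pZ] by (intro mult_left_mono mult_right_mono) simp_all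
  finally show ?thesis by simp
qed

lemma coercive_if_pos_definite:
  fixes M :: "real^'n^'n"
  assumes pd: "\<And>x. x \<noteq> 0 \<Longrightarrow> 0 < x \<bullet> (M *v x)"
  obtains c where "0 < c" "\<And>x. c * norm x ^ 2 \<le> x \<bullet> (M *v x)"
proof -
  define f where "f x = x \<bullet> (M *v x)" for x :: "real^'n"
  obtain x1 :: "real^'n" where "norm x1 = 1" using vector_choose_size[of 1] by auto
  then have "sphere (0::real^'n) 1 \<noteq> {}" by auto
  moreover have "continuous_on (sphere 0 1) f" unfolding f_def
    by (intro continuous_on_inner continuous_on_id
        bounded_linear.continuous_on[OF matrix_vector_mul_bounded_linear])
  ultimately obtain x0 where x0: "x0 \<in> sphere 0 1" "\<And>y. y \<in> sphere 0 1 \<Longrightarrow> f x0 \<le> f y"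
    using continuous_attains_inf[OF compact_sphere] by blast
  have "x0 \<noteq> 0" using x0(1) by auto
  then have "0 < f x0" unfolding f_def by (rule pd)
  moreover have "f x0 * norm x ^ 2 \<le> x \<bullet> (M *v x)" for x
  proof (cases "x = 0")
    case False
    have "f x0 \<le> f ((1 / norm x) *\<^sub>R x)" using False by (intro x0(2)) simp
    also have "f ((1 / norm x) *\<^sub>R x) = f x / norm x ^ 2" unfolding f_def
      by (simp add: matrix_vector_mult_scaleR power2_eq_square field_simps)
    finally show ?thesis using False unfolding f_def by (simp add: field_simps)
  qed simp
  ultimately show thesis by (rule that)
qed

lemma invertible_coercive_add:
  fixes R D :: "real^'n^'n"
  assumes R: "\<And>x. \<rho> * norm x ^ 2 \<le> x \<bullet> (R *v x)" and D: "norm D < \<rho>"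
  shows "invertible (R + D)"
proof (rule invertible_if_ker_trivial)
  fix x assume "(R + D) *v x = 0"
  then have "x \<bullet> (R *v x) + x \<bullet> (D *v x) = 0" unfolding quad_form_add[symmetric] by simp
  with R[of x] abs_quad_form_le[of x D] have "(\<rho> - norm D) * norm x ^ 2 \<le> 0"
    by (simp add: left_diff_distrib abs_le_iff)
  with D have "norm x ^ 2 \<le> 0" by (simp add: mult_le_0_iff)
  then show "x = 0" by simp
qed

section \<open>Linear recursive inequalities\<close>

lemma linear_recursion_bound:
  fixes v :: "nat \<Rightarrow> real"
  assumes rec: "\<And>i. i \<ge> N \<Longrightarrow> v (Suc i) \<le> a * v i + c" and a: "0 \<le> a" "a < 1" and c: "0 \<le> c"
  shows "v (N + k) \<le> a ^ k * v N + c / (1 - a)"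
proof (induction k)
  case (Suc k)
  have "v (N + Suc k) \<le> a * v (N + k) + c" using rec[of "N + k"] by simp
  also have "\<dots> \<le> a * (a ^ k * v N + c / (1 - a)) + c" by (intro add_right_mono mult_left_mono Suc a)
  also have "\<dots> = a ^ Suc k * v N + c / (1 - a)" using a by (simp add: field_simps)
  finally show ?case .
qed (use a c in simp)

lemma linear_recursion_eventually_le:
  fixes v :: "nat \<Rightarrow> real"
  assumes rec: "\<And>i. i \<ge> N \<Longrightarrow> v (Suc i) \<le> a * v i + c" and a: "0 \<le> a" "a < 1" and c: "0 \<le> c"
    and r: "0 < r"
  shows "eventually (\<lambda>i. v i \<le> c / (1 - a) + r) sequentially"
proof -
  have "(\<lambda>k. a ^ k * v N) \<longlonglongrightarrow> 0"
    using tendsto_mult_left_zero[OF LIMSEQ_power_zero[of a]] a by simp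
  from LIMSEQ_D[OF this r] obtain k0 where k0: "\<And>k. k \<ge> k0 \<Longrightarrow> a ^ k * v N < r" by force
  show ?thesis
  proof (rule eventually_sequentiallyI[of "N + k0"])
    fix i assume i: "N + k0 \<le> i"
    have "v (N + (i - N)) \<le> a ^ (i - N) * v N + c / (1 - a)"
      by (rule linear_recursion_bound[where v = v and N = N, OF rec a c])
    moreover have "a ^ (i - N) * v N < r" using i by (intro k0) simp
    ultimately show "v i \<le> c / (1 - a) + r" using i by simp
  qed
qed

lemma linear_recursion_tendsto_zero:
  fixes v u :: "nat \<Rightarrow> real"
  assumes rec: "\<And>i. i \<ge> N \<Longrightarrow> v (Suc i) \<le> a * v i + u i" and a: "0 \<le> a" "a < 1"
    and u: "u \<longlonglongrightarrow> 0" and v: "\<And>i. i \<ge> N \<Longrightarrow> 0 \<le> v i"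
  shows "v \<longlonglongrightarrow> 0"
proof (rule order_tendstoI)
  fix r :: real assume r: "0 < r"
  define c where "c = r * (1 - a) / 2"
  have c: "0 < c" "c / (1 - a) = r / 2" using r a by (simp_all add: c_def field_simps)
  from LIMSEQ_D[OF u c(1)] obtain N0 where N0: "\<And>n. n \<ge> N0 \<Longrightarrow> norm (u n) < c" by auto
  have rec': "v (Suc i) \<le> a * v i + c" if "i \<ge> max N N0" for i
    using rec[of i] N0[of i] that by auto
  from linear_recursion_eventually_le[where v = v and N = "max N N0", OF rec' a less_imp_le[OF c(1)],
      of "r / 4"] r
  show "eventually (\<lambda>i. v i < r) sequentially"
    unfolding c(2) by (auto elim: eventually_mono)
next
  fix r :: real assume "r < 0"
  then show "eventually (\<lambda>i. r < v i) sequentially"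
    using v by (auto simp: eventually_sequentially intro: less_le_trans)
qed

lemma less_if_SUP_ereal_less:
  assumes "(SUP i\<in>S. ereal (f i)) < ereal d" "i \<in> S"
  shows "f i < d"
  using order.strict_trans1[OF SUP_upper[OF assms(2), of "\<lambda>i. ereal (f i)"] assms(1)] by simp

lemma limsup_le_if_eventually_le:
  assumes "\<And>e. 0 < e \<Longrightarrow> eventually (\<lambda>i. f i \<le> x + e) sequentially"
  shows "limsup (\<lambda>i. ereal (f i)) \<le> ereal x"
proof (rule ereal_le_epsilon2)
  fix e :: real assume "0 < e"
  then have "limsup (\<lambda>i. ereal (f i)) \<le> ereal (x + e)"
    using assms by (intro Limsup_bounded) (auto elim: eventually_mono)
  then show "limsup (\<lambda>i. ereal (f i)) \<le> ereal x + ereal e" by simp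
qed

lemma quadratic_small_bound:
  fixes \<delta> c b :: real
  assumes "0 < \<delta>" "0 < c" "0 < b"
  obtains \<delta>' where "0 < \<delta>'" "\<And>x. 0 \<le> x \<Longrightarrow> x < \<delta>' \<Longrightarrow> x < \<delta> \<and> c * x\<^sup>2 \<le> b"
proof
  show "0 < min \<delta> (sqrt (b / c))" using assms by simp
  fix x :: real assume x: "0 \<le> x" "x < min \<delta> (sqrt (b / c))"
  then have "x\<^sup>2 \<le> (sqrt (b / c))\<^sup>2" by (intro power_mono) simp_all
  then show "x < \<delta> \<and> c * x\<^sup>2 \<le> b" using x assms by (simp add: field_simps)
qed

lemma contraction_from_decrease:
  fixes V V' t \<eta> g \<kappa> :: real
  assumes V: "0 \<le> V" and t: "0 \<le> t" and \<eta>: "0 \<le> \<eta>" "\<eta> \<le> g / 2"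
    and g: "0 < g" "g \<le> 1 / 2" "g \<le> \<kappa>"
    and decrease: "\<kappa> * V \<le> V - V' + \<eta> * (t + V')"
  shows "V' \<le> (1 - g / 2) * V + 2 * \<eta> * t"
proof -
  have "g * V \<le> \<kappa> * V" using g V by (intro mult_right_mono) simp_all
  then have "(1 - \<eta>) * V' \<le> (1 - g) * V + \<eta> * t" using decrease by (simp add: algebra_simps)
  also have "\<dots> \<le> (1 - \<eta>) * ((1 - g / 2) * V + 2 * \<eta> * t)"
  proof -
    have "\<eta> * (1 - g / 2) \<le> g / 2" using mult_left_le[of "1 - g / 2" \<eta>] \<eta> g by linarith
    then have "\<eta> * (1 - g / 2) * V \<le> (g / 2) * V" using V by (rule mult_right_mono)
    moreover have "1 * (\<eta> * t) \<le> (2 * (1 - \<eta>)) * (\<eta> * t)"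
      using \<eta> g t by (intro mult_right_mono) simp_all
    moreover have "(1 - \<eta>) * ((1 - g / 2) * V + 2 * \<eta> * t) = (1 - g) * V + \<eta> * t
        + ((g / 2) * V - \<eta> * (1 - g / 2) * V) + ((2 * (1 - \<eta>)) * (\<eta> * t) - 1 * (\<eta> * t))"
      by (simp add: field_simps)
    ultimately show ?thesis by linarith
  qed
  finally show ?thesis using \<eta> g by simp
qed

section \<open>Policy iteration for the LQR problem\<close>

locale lqr =
  fixes A :: "real^'n^'n" and B :: "real^'m^'n" and Q :: "real^'n^'n" and R :: "real^'m^'m"
    and Pstar :: "real^'n^'n"
  assumes Q_symmetric: "symmetric_mat Q" and R_symmetric: "symmetric_mat R"
    and Pstar_symmetric: "symmetric_mat Pstar" and R_invertible: "invertible R"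
    and riccati: "transpose A ** Pstar + Pstar ** A
                    - Pstar ** B ** matrix_inv R ** transpose B ** Pstar + Q = 0"
begin

definition Rinv :: "real^'m^'m" where "Rinv = matrix_inv R"

definition closed_loop :: "real^'n^'m \<Rightarrow> real^'n^'n" where "closed_loop K = A - B ** K"

definition kleinman_gain :: "real^'n^'n \<Rightarrow> real^'n^'m" where
  "kleinman_gain P = Rinv ** transpose B ** P"

abbreviation Kstar :: "real^'n^'m" where "Kstar \<equiv> kleinman_gain Pstar"

definition cost_matrix :: "real^'n^'m \<Rightarrow> real^'n^'n \<Rightarrow> bool" where
  "cost_matrix K P \<longleftrightarrow> symmetric_mat P \<and> lyapunov (closed_loop K) P (Q + transpose K ** R ** K)"

lemma cost_matrix_iff:
  "cost_matrix K P \<longleftrightarrow> symmetric_mat P \<and>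
     transpose (A - B ** K) ** P + P ** (A - B ** K) + Q + transpose K ** R ** K = 0"
  by (simp add: cost_matrix_def lyapunov_def closed_loop_def add.assoc)

lemma R_Rinv: "R ** Rinv = idm" "Rinv ** R = idm"
  using invertible_matrix_inv[OF R_invertible] unfolding Rinv_def by auto

lemma R_Rinv_mult: "R ** (Rinv ** X) = X" "Rinv ** (R ** X) = X"
  by (simp_all add: matrix_mul_assoc R_Rinv)

lemma Rinv_symmetric: "transpose Rinv = Rinv"
proof -
  have "R ** transpose Rinv = idm"
    using arg_cong[OF R_Rinv(2), of transpose] R_symmetric
    by (simp add: matrix_transpose_mul symmetric_mat_def)
  then have "Rinv ** (R ** transpose Rinv) = Rinv" by simp
  then show ?thesis by (simp add: R_Rinv_mult)
qed

lemmas lqr_simps = matrix_ring_simps Q_symmetric[unfolded symmetric_mat_def]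
  R_symmetric[unfolded symmetric_mat_def] Pstar_symmetric[unfolded symmetric_mat_def]
  Rinv_symmetric R_Rinv R_Rinv_mult kleinman_gain_def closed_loop_def

lemma cost_matrix_Kstar: "cost_matrix Kstar Pstar"
proof -
  have "transpose (closed_loop Kstar) ** Pstar + Pstar ** closed_loop Kstar
          + (Q + transpose Kstar ** R ** Kstar)
        = transpose A ** Pstar + Pstar ** A - Pstar ** B ** matrix_inv R ** transpose B ** Pstar + Q"
    by (simp add: lqr_simps Rinv_def[symmetric])
  then show ?thesis
    using riccati Pstar_symmetric unfolding cost_matrix_def lyapunov_def by simp
qed

lemma cost_gap_lyapunov:
  assumes "cost_matrix K P"
  shows "lyapunov (closed_loop K) (P - Pstar) (transpose (K - Kstar) ** R ** (K - Kstar))"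
proof -
  have "transpose (closed_loop K) ** (P - Pstar) + (P - Pstar) ** closed_loop K
          + transpose (K - Kstar) ** R ** (K - Kstar)
     = (transpose (closed_loop K) ** P + P ** closed_loop K + (Q + transpose K ** R ** K))
       - (transpose A ** Pstar + Pstar ** A - Pstar ** B ** matrix_inv R ** transpose B ** Pstar + Q)"
    by (simp add: lqr_simps Rinv_def[symmetric])
  then show ?thesis using assms riccati unfolding cost_matrix_def lyapunov_def by simp
qed

lemma cost_gap_lyapunov_Kstar:
  assumes "cost_matrix K P"
  shows "lyapunov (closed_loop Kstar) (P - Pstar)
     (transpose (K - kleinman_gain P) ** R ** (K - kleinman_gain P)
      - transpose (kleinman_gain (P - Pstar)) ** R ** kleinman_gain (P - Pstar))"
proof -
  have sP: "transpose P = P" using assms unfolding cost_matrix_def symmetric_mat_def by simp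
  have "transpose (closed_loop K) ** (P - Pstar) + (P - Pstar) ** closed_loop K
          + transpose (K - Kstar) ** R ** (K - Kstar)
     = transpose (closed_loop Kstar) ** (P - Pstar) + (P - Pstar) ** closed_loop Kstar
       + (transpose (K - kleinman_gain P) ** R ** (K - kleinman_gain P)
          - transpose (kleinman_gain (P - Pstar)) ** R ** kleinman_gain (P - Pstar))"
    using sP by (simp add: lqr_simps)
  then show ?thesis using cost_gap_lyapunov[OF assms] unfolding lyapunov_def by simp
qed

text \<open>Completing the square around the Kleinman gain \<open>R\<^sup>-\<^sup>1 B\<^sup>T P\<close>.\<close>

lemma cost_matrix_lyapunov_other_gain:
  assumes "cost_matrix K P"
  shows "lyapunov (closed_loop K') P (Q + transpose K' ** R ** K'
      - transpose (K' - kleinman_gain P) ** R ** (K' - kleinman_gain P)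
      + transpose (K - kleinman_gain P) ** R ** (K - kleinman_gain P))"
proof -
  have sP: "transpose P = P" using assms unfolding cost_matrix_def symmetric_mat_def by simp
  have "transpose (closed_loop K') ** P + P ** closed_loop K' + (Q + transpose K' ** R ** K')
    = (transpose (closed_loop K) ** P + P ** closed_loop K + (Q + transpose K ** R ** K))
      + (transpose (K' - kleinman_gain P) ** R ** (K' - kleinman_gain P)
         - transpose (K - kleinman_gain P) ** R ** (K - kleinman_gain P))"
    using sP by (simp add: lqr_simps)
  then show ?thesis using assms unfolding cost_matrix_def lyapunov_def by (simp add: algebra_simps)
qed

end

locale lqr_coercive = lqr A B Q R Pstar
  for A :: "real^'n^'n" and B :: "real^'m^'n" and Q :: "real^'n^'n" and R :: "real^'m^'m"
    and Pstar :: "real^'n^'n" +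
  fixes q \<rho> :: real
  assumes q_pos: "0 < q" and Q_coercive: "\<And>x. q * norm x ^ 2 \<le> x \<bullet> (Q *v x)"
    and \<rho>_pos: "0 < \<rho>" and R_coercive: "\<And>x. \<rho> * norm x ^ 2 \<le> x \<bullet> (R *v x)"
    and Pstar_pos: "\<And>x. x \<noteq> 0 \<Longrightarrow> 0 < x \<bullet> (Pstar *v x)"
begin

lemma quad_form_congruence_nonneg: "0 \<le> x \<bullet> ((transpose K ** R ** K) *v x)"
  unfolding quad_form_congruence
  by (rule order_trans[OF _ R_coercive]) (simp add: less_imp_le[OF \<rho>_pos])

lemma quad_form_congruence_le_Q:
  "x \<bullet> ((transpose E ** R ** E) *v x) \<le> (norm R * norm E ^ 2 / q) * (x \<bullet> (Q *v x))"
proof -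
  have "x \<bullet> ((transpose E ** R ** E) *v x) \<le> (norm R * norm E ^ 2 / q) * (q * norm x ^ 2)"
    using quad_form_congruence_le[of x E R] q_pos by simp
  also have "\<dots> \<le> (norm R * norm E ^ 2 / q) * (x \<bullet> (Q *v x))"
    using q_pos by (intro mult_left_mono Q_coercive) simp
  finally show ?thesis .
qed

lemma norm_R_pos: "0 < norm R"
proof -
  obtain x :: "real^'m" where x: "norm x = 1" using vector_choose_size[of 1] by auto
  have "\<rho> \<le> x \<bullet> (R *v x)" using R_coercive[of x] x by simp
  also have "\<dots> \<le> norm R" using abs_quad_form_le[of x R] x by simp
  finally show ?thesis using \<rho>_pos by linarith
qed

lemma lyapunov_Kstar: "lyapunov (closed_loop Kstar) Pstar (Q + transpose Kstar ** R ** Kstar)"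
  using cost_matrix_Kstar unfolding cost_matrix_def by simp

lemma trace_Pstar_pos: "0 < trace Pstar"
  unfolding trace_quad_form by (intro sum_pos Pstar_pos) (auto simp: axis_eq_0_iff)

lemma hurwitz_Kstar: "hurwitz (closed_loop Kstar)"
proof (rule lyapunov_hurwitz[OF Pstar_symmetric Pstar_pos])
  fix x :: "real^'n" assume "x \<noteq> 0"
  then have "0 < q * norm x ^ 2" using q_pos by simp
  moreover have "x \<bullet> ((transpose (closed_loop Kstar) ** Pstar + Pstar ** closed_loop Kstar) *v x)
      = - (x \<bullet> (Q *v x) + x \<bullet> ((transpose Kstar ** R ** Kstar) *v x))"
    using lyapunov_quad_form[OF lyapunov_Kstar, of x] by (simp add: quad_form_add)
  ultimately show "x \<bullet> ((transpose (closed_loop Kstar) ** Pstar + Pstar ** closed_loop Kstar) *v x) < 0"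
    using Q_coercive[of x] quad_form_congruence_nonneg[of x Kstar] by linarith
qed

lemma cost_matrix_ge_Pstar:
  assumes "hurwitz (closed_loop K)" "cost_matrix K P"
  shows "pos_semidef (P - Pstar)"
  using assms(1) cost_gap_lyapunov[OF assms(2)]
  by (rule lyapunov_pos_semidef) (simp add: pos_semidef_def quad_form_congruence_nonneg)

lemma norm_cost_gap_le_trace:
  assumes "hurwitz (closed_loop K)" "cost_matrix K P"
  shows "norm (P - Pstar) \<le> trace (P - Pstar)"
  using assms(2) Pstar_symmetric unfolding cost_matrix_def
  by (intro pos_semidef_norm_le_trace symmetric_mat_diff cost_matrix_ge_Pstar[OF assms]) auto

lemma cost_matrix_trace_le:
  assumes "hurwitz (closed_loop K)" "cost_matrix K P" "cost_matrix K P'"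
  shows "trace P \<le> trace P'"
proof -
  have "lyapunov (closed_loop K) (P' - P) 0"
    using lyapunov_diff[of "closed_loop K" P'] assms(2,3) unfolding cost_matrix_def by fastforce
  then have "pos_semidef (P' - P)"
    by (rule lyapunov_pos_semidef[OF assms(1)]) (simp add: pos_semidef_def)
  then show ?thesis by (rule pos_semidef_trace_mono)
qed

lemma trace_gap_le_gain_error:
  assumes "cost_matrix K P"
  shows "q * trace (P - Pstar) \<le> norm R * norm (K - kleinman_gain P) ^ 2 * trace Pstar"
proof -
  define a where "a = K - kleinman_gain P"
  define b where "b = kleinman_gain (P - Pstar)"
  define \<theta> where "\<theta> = norm R * norm a ^ 2 / q"
  have \<theta>: "0 \<le> \<theta>" unfolding \<theta>_def using q_pos by simp
  \<comment> \<open>Compare \<open>P - P\<^sup>*\<close> with \<open>\<theta> P\<^sup>*\<close> through the optimal closed loop.\<close>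
  have L: "lyapunov (closed_loop Kstar) (\<theta> *\<^sub>R Pstar - (P - Pstar))
     (\<theta> *\<^sub>R (Q + transpose Kstar ** R ** Kstar) - (transpose a ** R ** a - transpose b ** R ** b))"
    unfolding a_def b_def
    by (rule lyapunov_diff[OF lyapunov_scaleR[OF lyapunov_Kstar] cost_gap_lyapunov_Kstar[OF assms]])
  have "pos_semidef (\<theta> *\<^sub>R (Q + transpose Kstar ** R ** Kstar) - (transpose a ** R ** a - transpose b ** R ** b))"
    unfolding pos_semidef_def
  proof
    fix x :: "real^'n"
    have "x \<bullet> ((transpose a ** R ** a) *v x) \<le> \<theta> * (x \<bullet> (Q *v x))"
      unfolding \<theta>_def by (rule quad_form_congruence_le_Q)
    moreover have "0 \<le> \<theta> * (x \<bullet> ((transpose Kstar ** R ** Kstar) *v x))"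
      by (intro mult_nonneg_nonneg \<theta> quad_form_congruence_nonneg)
    moreover have "0 \<le> x \<bullet> ((transpose b ** R ** b) *v x)" by (rule quad_form_congruence_nonneg)
    ultimately show "0 \<le> x \<bullet> ((\<theta> *\<^sub>R (Q + transpose Kstar ** R ** Kstar)
        - (transpose a ** R ** a - transpose b ** R ** b)) *v x)"
      by (simp add: quad_form_diff quad_form_add quad_form_scaleR algebra_simps)
  qed
  from lyapunov_pos_semidef[OF hurwitz_Kstar L this]
  have "trace (P - Pstar) \<le> trace (\<theta> *\<^sub>R Pstar)" by (rule pos_semidef_trace_mono)
  then show ?thesis using q_pos unfolding \<theta>_def a_def by (simp add: trace_scaleR field_simps)
qed

lemma hurwitz_if_gain_error_small:
  assumes P: "cost_matrix K P" and gap: "pos_semidef (P - Pstar)"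
    and small: "norm R * norm (K' - kleinman_gain P) ^ 2 < q"
  shows "hurwitz (closed_loop K')"
proof (rule lyapunov_hurwitz)
  show "symmetric_mat P" using P unfolding cost_matrix_def by simp
next
  fix x :: "real^'n" assume "x \<noteq> 0"
  then show "0 < x \<bullet> (P *v x)"
    using Pstar_pos[of x] gap unfolding pos_semidef_def by (smt (verit) quad_form_diff)
next
  fix x :: "real^'n" assume x: "x \<noteq> 0"
  define E where "E = K' - kleinman_gain P"
  define a where "a = K - kleinman_gain P"
  have "x \<bullet> ((transpose (closed_loop K') ** P + P ** closed_loop K') *v x)
      = - (x \<bullet> (Q *v x) + x \<bullet> ((transpose K' ** R ** K') *v x)
           - x \<bullet> ((transpose E ** R ** E) *v x) + x \<bullet> ((transpose a ** R ** a) *v x))"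
    using lyapunov_quad_form[OF cost_matrix_lyapunov_other_gain[OF P, of K']]
    unfolding E_def a_def by (simp add: quad_form_add quad_form_diff)
  moreover have "x \<bullet> ((transpose E ** R ** E) *v x) \<le> norm R * norm E ^ 2 * norm x ^ 2"
    by (rule quad_form_congruence_le)
  moreover have "norm R * norm E ^ 2 * norm x ^ 2 < q * norm x ^ 2"
    using small x unfolding E_def by (intro mult_strict_right_mono) simp_all
  ultimately show "x \<bullet> ((transpose (closed_loop K') ** P + P ** closed_loop K') *v x) < 0"
    using Q_coercive[of x] quad_form_congruence_nonneg[of x K'] quad_form_congruence_nonneg[of x a]
    by linarith
qed

text \<open>With \<open>\<eta> = \<parallel>R\<parallel> \<parallel>K' - R\<^sup>-\<^sup>1 B\<^sup>T P\<parallel>\<^sup>2 / q\<close>, the matrix \<open>P - P' + \<eta> P'\<close> solves a Lyapunov equation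
  for \<open>A - B K'\<close> whose forcing term dominates \<open>\<rho> (K - R\<^sup>-\<^sup>1 B\<^sup>T P)\<^sup>T (K - R\<^sup>-\<^sup>1 B\<^sup>T P)\<close>.\<close>

lemma gain_error_le_trace_decrease:
  assumes P: "cost_matrix K P" and h': "hurwitz (closed_loop K')" and P': "cost_matrix K' P'"
  defines "\<eta> \<equiv> norm R * norm (K' - kleinman_gain P) ^ 2 / q"
  shows "\<rho> * norm (K - kleinman_gain P) ^ 2
           \<le> 2 * (trace (P - P') + \<eta> * trace P') * norm (closed_loop K')"
    and "0 \<le> trace (P - P') + \<eta> * trace P'"
proof -
  define E where "E = K' - kleinman_gain P"
  define a where "a = K - kleinman_gain P"
  have \<eta>: "0 \<le> \<eta>" unfolding \<eta>_def using q_pos by simp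
  define C where "C = (Q + transpose K' ** R ** K' - transpose E ** R ** E + transpose a ** R ** a)
      - (Q + transpose K' ** R ** K') + \<eta> *\<^sub>R (Q + transpose K' ** R ** K')"
  have Z: "lyapunov (closed_loop K') ((P - P') + \<eta> *\<^sub>R P') C"
    using P' unfolding C_def E_def a_def cost_matrix_def
    by (intro lyapunov_add lyapunov_diff lyapunov_scaleR cost_matrix_lyapunov_other_gain[OF P]) auto
  have C: "\<rho> * norm (a *v x) ^ 2 \<le> x \<bullet> (C *v x)" for x
  proof -
    have "x \<bullet> ((transpose E ** R ** E) *v x) \<le> \<eta> * (x \<bullet> (Q *v x))"
      unfolding \<eta>_def E_def by (rule quad_form_congruence_le_Q)
    moreover have "0 \<le> \<eta> * (x \<bullet> ((transpose K' ** R ** K') *v x))"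
      by (intro mult_nonneg_nonneg \<eta> quad_form_congruence_nonneg)
    moreover have "\<rho> * norm (a *v x) ^ 2 \<le> x \<bullet> ((transpose a ** R ** a) *v x)"
      unfolding quad_form_congruence by (rule R_coercive)
    ultimately show ?thesis unfolding C_def
      by (simp add: quad_form_diff quad_form_add quad_form_scaleR algebra_simps)
  qed
  have "pos_semidef C"
    unfolding pos_semidef_def using C \<rho>_pos by (smt (verit) mult_nonneg_nonneg zero_le_power2)
  then have Z_psd: "pos_semidef ((P - P') + \<eta> *\<^sub>R P')" by (rule lyapunov_pos_semidef[OF h' Z])
  have "symmetric_mat ((P - P') + \<eta> *\<^sub>R P')"
    using P P' unfolding cost_matrix_def
    by (intro symmetric_mat_add symmetric_mat_diff symmetric_mat_scaleR) auto
  from lyapunov_trace_le[OF this Z_psd Z]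
  have "trace C \<le> 2 * (trace (P - P') + \<eta> * trace P') * norm (closed_loop K')"
    by (simp add: trace_add trace_scaleR)
  moreover have "\<rho> * norm a ^ 2 \<le> trace C" by (rule norm_sq_le_trace_if_quad_form_ge[OF C])
  ultimately show "\<rho> * norm (K - kleinman_gain P) ^ 2
      \<le> 2 * (trace (P - P') + \<eta> * trace P') * norm (closed_loop K')"
    unfolding a_def by linarith
  show "0 \<le> trace (P - P') + \<eta> * trace P'"
    using pos_semidef_trace_nonneg[OF Z_psd] by (simp add: trace_add trace_scaleR)
qed

lemma trace_gap_contraction:
  assumes P: "cost_matrix K P" and h: "hurwitz (closed_loop K)"
    and P': "cost_matrix K' P'" and h': "hurwitz (closed_loop K')"
    and F: "norm (closed_loop K') \<le> F"
    and g: "0 < g" "g \<le> 1 / 2" "g \<le> \<rho> * q / (2 * norm R * trace Pstar * F)"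
    and \<eta>: "norm R * norm (K' - kleinman_gain P) ^ 2 / q \<le> g / 2"
  shows "trace (P' - Pstar)
    \<le> (1 - g / 2) * trace (P - Pstar) + 2 * (norm R * norm (K' - kleinman_gain P) ^ 2 / q) * trace Pstar"
proof (rule contraction_from_decrease)
  define \<eta> where "\<eta> = norm R * norm (K' - kleinman_gain P) ^ 2 / q"
  define T where "T = trace (P - P') + \<eta> * trace P'"
  have "0 < F"
  proof (rule ccontr)
    assume "\<not> 0 < F"
    then have "\<rho> * q / (2 * norm R * trace Pstar * F) \<le> 0"
      using \<rho>_pos q_pos norm_R_pos trace_Pstar_pos
      by (intro divide_nonneg_nonpos) (simp_all add: mult_nonneg_nonpos)
    with g show False by linarith
  qed
  have dec: "\<rho> * norm (K - kleinman_gain P) ^ 2 \<le> 2 * T * norm (closed_loop K')" and T: "0 \<le> T"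
    using gain_error_le_trace_decrease[OF P h' P'] unfolding T_def \<eta>_def by auto
  have "\<rho> * (q * trace (P - Pstar)) \<le> \<rho> * (norm R * norm (K - kleinman_gain P) ^ 2 * trace Pstar)"
    using trace_gap_le_gain_error[OF P] \<rho>_pos by simp
  also have "\<dots> = norm R * trace Pstar * (\<rho> * norm (K - kleinman_gain P) ^ 2)" by (simp add: mult_ac)
  also have "\<dots> \<le> norm R * trace Pstar * (2 * T * F)"
    using dec F T norm_R_pos trace_Pstar_pos
    by (intro mult_left_mono order_trans[OF dec] mult_left_mono[of _ F "2 * T"]) simp_all
  finally show "\<rho> * q / (2 * norm R * trace Pstar * F) * trace (P - Pstar)
      \<le> trace (P - Pstar) - trace (P' - Pstar) + \<eta> * (trace Pstar + trace (P' - Pstar))"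
    using \<open>0 < F\<close> norm_R_pos trace_Pstar_pos unfolding T_def
    by (simp add: field_simps trace_sub)
  show "0 \<le> trace (P - Pstar)" by (rule pos_semidef_trace_nonneg[OF cost_matrix_ge_Pstar[OF h P]])
qed (use assms q_pos norm_R_pos trace_Pstar_pos in \<open>simp_all add: less_imp_le\<close>)

section \<open>The perturbed iteration\<close>

definition perturbed_gain :: "real^'n^'n \<Rightarrow> real^('n + 'm)^('n + 'm) \<Rightarrow> real^'n^'m" where
  "perturbed_gain P D = matrix_inv (blk22 (Gtil A B Q R P + D)) ** blk21 (Gtil A B Q R P + D)"

lemma perturbed_gain_error:
  assumes D: "norm D \<le> \<delta>" and \<delta>: "norm Rinv * \<delta> \<le> 1 / 2" "\<delta> < \<rho>"
  shows "invertible (blk22 (Gtil A B Q R P + D))"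
    and "norm (perturbed_gain P D - kleinman_gain P) \<le> 2 * norm Rinv * \<delta> * (1 + norm (kleinman_gain P))"
proof -
  define D22 where "D22 = blk22 D"
  define D21 where "D21 = blk21 D"
  have n22: "norm D22 \<le> \<delta>" and n21: "norm D21 \<le> \<delta>"
    using D norm_blk22_le[of D] norm_blk21_le[of D] unfolding D22_def D21_def by linarith+
  have "0 \<le> \<delta>" using D norm_ge_zero[of D] by linarith
  have G22: "blk22 (Gtil A B Q R P + D) = R + D22" unfolding D22_def by (rule blk22_Gtil_add)
  have G21: "blk21 (Gtil A B Q R P + D) = transpose B ** P + D21" unfolding D21_def by (rule blk21_Gtil_add)
  show inv: "invertible (blk22 (Gtil A B Q R P + D))"
    unfolding G22 using n22 \<delta>(2) by (intro invertible_coercive_add[OF R_coercive]) simp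
  define K' where "K' = perturbed_gain P D"
  define E where "E = K' - kleinman_gain P"
  have "R ** K' + D22 ** K' = transpose B ** P + D21"
    using invertible_matrix_inv(1)[OF inv] unfolding K'_def perturbed_gain_def G22 G21
    by (simp add: matrix_mul_assoc matrix_add_rdistrib[symmetric])
  then have "R ** E = D21 - D22 ** K'"
    unfolding E_def kleinman_gain_def
    by (simp add: matrix_diff_ldistrib matrix_mul_assoc[symmetric] R_Rinv_mult algebra_simps)
  then have "E = Rinv ** (D21 - D22 ** K')" using R_Rinv_mult(2)[of E] by simp
  then have "norm E \<le> norm Rinv * norm (D21 - D22 ** K')" by (simp add: norm_matrix_mult_le)
  also have "\<dots> \<le> norm Rinv * (norm D21 + norm D22 * norm K')"
    using norm_triangle_ineq4[of D21 "D22 ** K'"] norm_matrix_mult_le[of D22 K']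
    by (intro mult_left_mono) simp_all
  also have "\<dots> \<le> norm Rinv * (\<delta> + \<delta> * (norm (kleinman_gain P) + norm E))"
  proof -
    have "norm K' \<le> norm (kleinman_gain P) + norm E"
      unfolding E_def by (metis add.commute diff_add_cancel norm_triangle_ineq)
    then have "norm D22 * norm K' \<le> \<delta> * (norm (kleinman_gain P) + norm E)"
      using n22 \<open>0 \<le> \<delta>\<close> by (intro mult_mono) simp_all
    then show ?thesis using n21 by (intro mult_left_mono) simp_all
  qed
  finally have "norm E \<le> norm Rinv * \<delta> * (1 + norm (kleinman_gain P)) + (norm Rinv * \<delta>) * norm E"
    by (simp add: algebra_simps)
  moreover have "(norm Rinv * \<delta>) * norm E \<le> (1 / 2) * norm E" using \<delta>(1) by (intro mult_right_mono) simp_all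
  ultimately show "norm (perturbed_gain P D - kleinman_gain P) \<le> 2 * norm Rinv * \<delta> * (1 + norm (kleinman_gain P))"
    unfolding E_def K'_def by linarith
qed

lemma norm_kleinman_gain_le: "norm (kleinman_gain P) \<le> norm Rinv * norm B * norm P"
proof -
  have "norm (kleinman_gain P) \<le> norm (Rinv ** transpose B) * norm P"
    unfolding kleinman_gain_def by (rule norm_matrix_mult_le)
  also have "\<dots> \<le> norm Rinv * norm B * norm P"
    using norm_matrix_mult_le[of Rinv "transpose B"] by (intro mult_right_mono) (simp_all add: norm_transpose)
  finally show ?thesis .
qed

lemma norm_cost_matrix_le:
  assumes "hurwitz (closed_loop K)" "cost_matrix K P"
  shows "norm P \<le> norm Pstar + trace (P - Pstar)"
  using norm_triangle_ineq[of Pstar "P - Pstar"] norm_cost_gap_le_trace[OF assms] by simp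

lemma perturbed_gain_bounds:
  assumes P: "cost_matrix K P" "hurwitz (closed_loop K)" "trace (P - Pstar) \<le> W"
  defines "cK \<equiv> norm Rinv * norm B * (norm Pstar + W)"
  defines "cE \<equiv> 2 * norm Rinv * (1 + cK) + 1"
  assumes D: "norm D < \<rho>" "cE * norm D \<le> 1"
  shows "invertible (blk22 (Gtil A B Q R P + D))"
    and "norm (perturbed_gain P D - kleinman_gain P) \<le> cE * norm D"
    and "norm (closed_loop (perturbed_gain P D)) \<le> norm A + norm B * (cK + 1)"
proof -
  have "norm (kleinman_gain P) \<le> norm Rinv * norm B * norm P" by (rule norm_kleinman_gain_le)
  also have "\<dots> \<le> cK"
    unfolding cK_def using norm_cost_matrix_le[OF P(2,1)] P(3) by (intro mult_left_mono) simp_all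
  finally have KP: "norm (kleinman_gain P) \<le> cK" .
  have "0 \<le> cK" using KP norm_ge_zero order_trans by blast
  then have "2 * norm Rinv * 1 \<le> 2 * norm Rinv * (1 + cK)" by (intro mult_left_mono) simp_all
  then have "2 * norm Rinv * norm D \<le> cE * norm D"
    unfolding cE_def by (intro mult_right_mono) simp_all
  then have D': "norm Rinv * norm D \<le> 1 / 2" using D(2) by linarith
  show "invertible (blk22 (Gtil A B Q R P + D))" by (rule perturbed_gain_error(1)[OF order_refl D' D(1)])
  have "norm (perturbed_gain P D - kleinman_gain P)
          \<le> 2 * norm Rinv * norm D * (1 + norm (kleinman_gain P))"
    by (rule perturbed_gain_error(2)[OF order_refl D' D(1)])
  also have "\<dots> \<le> 2 * norm Rinv * norm D * (1 + cK)" using KP by (intro mult_left_mono) simp_all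
  also have "\<dots> \<le> cE * norm D" unfolding cE_def by (simp add: algebra_simps)
  finally show E: "norm (perturbed_gain P D - kleinman_gain P) \<le> cE * norm D" .
  have "norm (perturbed_gain P D) \<le> norm (kleinman_gain P) + norm (perturbed_gain P D - kleinman_gain P)"
    by (metis add.commute diff_add_cancel norm_triangle_ineq)
  then have "norm (perturbed_gain P D) \<le> cK + 1" using KP E D(2) by linarith
  then have "norm (B ** perturbed_gain P D) \<le> norm B * (cK + 1)"
    using norm_matrix_mult_le[of B "perturbed_gain P D"] by (smt (verit) mult_left_mono norm_ge_zero)
  then show "norm (closed_loop (perturbed_gain P D)) \<le> norm A + norm B * (cK + 1)"
    unfolding closed_loop_def using norm_triangle_ineq4[of A "B ** perturbed_gain P D"] by linarith
qed

definition perturbed_step_contracts :: "real \<Rightarrow> real \<Rightarrow> real \<Rightarrow> real \<Rightarrow> bool" where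
  "perturbed_step_contracts W \<delta> a c \<longleftrightarrow> (\<forall>K P D.
     cost_matrix K P \<and> hurwitz (closed_loop K) \<and> trace (P - Pstar) \<le> W \<and> norm D < \<delta> \<longrightarrow>
       invertible (blk22 (Gtil A B Q R P + D)) \<and> hurwitz (closed_loop (perturbed_gain P D))
       \<and> (\<forall>P'. cost_matrix (perturbed_gain P D) P' \<longrightarrow>
             trace (P' - Pstar) \<le> a * trace (P - Pstar) + c * norm D ^ 2))"

text \<open>On the sublevel set \<open>tr (P - P\<^sup>*) \<le> W\<close> the matrix \<open>P\<close>, hence the Kleinman gain, is bounded, so
  the gain error caused by \<open>D\<close> is \<open>O(\<parallel>D\<parallel>)\<close> and its weight \<open>\<eta>\<close> in the contraction is \<open>O(\<parallel>D\<parallel>\<^sup>2)\<close>.\<close>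

lemma perturbed_step_contracts_if_small:
  assumes W: "0 \<le> W"
  defines "cK \<equiv> norm Rinv * norm B * (norm Pstar + W)"
  defines "cE \<equiv> 2 * norm Rinv * (1 + cK) + 1"
  assumes g: "0 < g" "g \<le> 1 / 2" "g \<le> \<rho> * q / (2 * norm R * trace Pstar * (norm A + norm B * (cK + 1) + 1))"
    and \<delta>: "\<delta> \<le> \<rho>" "cE * \<delta> \<le> 1" "norm R * (cE * \<delta>) ^ 2 / q \<le> g / 2"
  shows "perturbed_step_contracts W \<delta> (1 - g / 2) (2 * trace Pstar * norm R * cE ^ 2 / q)"
  unfolding perturbed_step_contracts_def
proof (intro allI impI, elim conjE)
  fix K P and D :: "real^('n + 'm)^('n + 'm)"
  assume P: "cost_matrix K P" "hurwitz (closed_loop K)" "trace (P - Pstar) \<le> W" and "norm D < \<delta>"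
  moreover have "0 \<le> cE" unfolding cE_def cK_def using W by simp
  ultimately have D: "norm D < \<rho>" "cE * norm D \<le> cE * \<delta>" using \<delta>(1) by (simp_all add: mult_left_mono)
  have "cE * norm D \<le> 1" using D(2) \<delta>(2) by linarith
  note bounds = perturbed_gain_bounds[OF P D(1) this[unfolded cE_def cK_def], folded cK_def, folded cE_def]
  define \<eta> where "\<eta> = norm R * norm (perturbed_gain P D - kleinman_gain P) ^ 2 / q"
  have \<eta>_le: "\<eta> \<le> norm R * (cE * norm D) ^ 2 / q"
    unfolding \<eta>_def using bounds(2) norm_R_pos q_pos
    by (intro divide_right_mono mult_left_mono power_mono) simp_all
  also have "\<dots> \<le> norm R * (cE * \<delta>) ^ 2 / q"
    using \<open>norm D < \<delta>\<close> \<open>0 \<le> cE\<close> norm_R_pos q_pos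
    by (intro divide_right_mono mult_left_mono power_mono) simp_all
  finally have \<eta>: "\<eta> \<le> g / 2" using \<delta>(3) by linarith
  have "2 * \<eta> * trace Pstar \<le> 2 * (norm R * (cE * norm D) ^ 2 / q) * trace Pstar"
    using \<eta>_le trace_Pstar_pos by (intro mult_right_mono) simp_all
  then have c: "2 * \<eta> * trace Pstar \<le> 2 * trace Pstar * norm R * cE ^ 2 / q * norm D ^ 2"
    by (simp add: power_mult_distrib mult_ac)
  have "\<eta> \<le> 1 / 4" using \<eta> g(2) by linarith
  then have "norm R * norm (perturbed_gain P D - kleinman_gain P) ^ 2 < q"
    using q_pos unfolding \<eta>_def by (simp add: divide_le_eq)
  then have stable: "hurwitz (closed_loop (perturbed_gain P D))"
    by (rule hurwitz_if_gain_error_small[OF P(1) cost_matrix_ge_Pstar[OF P(2,1)]])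
  have "norm (closed_loop (perturbed_gain P D)) \<le> norm A + norm B * (cK + 1) + 1" using bounds(3) by simp
  note contraction = trace_gap_contraction[OF P(1,2) _ stable this g \<eta>[unfolded \<eta>_def]]
  show "invertible (blk22 (Gtil A B Q R P + D)) \<and> hurwitz (closed_loop (perturbed_gain P D))
    \<and> (\<forall>P'. cost_matrix (perturbed_gain P D) P' \<longrightarrow> trace (P' - Pstar)
         \<le> (1 - g / 2) * trace (P - Pstar) + 2 * trace Pstar * norm R * cE ^ 2 / q * norm D ^ 2)"
    using bounds(1) stable contraction c unfolding \<eta>_def by fastforce
qed

lemma perturbed_step:
  assumes W: "0 \<le> W"
  obtains a c \<delta> where "0 \<le> a" "a < 1" "0 < c" "0 < \<delta>" "perturbed_step_contracts W \<delta> a c"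
proof -
  define cK where "cK = norm Rinv * norm B * (norm Pstar + W)"
  define cE where "cE = 2 * norm Rinv * (1 + cK) + 1"
  define g where "g = min (\<rho> * q / (2 * norm R * trace Pstar * (norm A + norm B * (cK + 1) + 1))) (1 / 2)"
  define \<delta> where "\<delta> = min \<rho> (min (1 / cE) (sqrt (g * q / (2 * norm R)) / cE))"
  have cK: "0 \<le> cK" unfolding cK_def using W by simp
  then have cE: "1 \<le> cE" unfolding cE_def by simp
  have "0 \<le> norm B * (cK + 1)" using cK by simp
  then have "0 < norm A + norm B * (cK + 1) + 1" using norm_ge_zero[of A] by linarith
  then have "0 < g" unfolding g_def using \<rho>_pos q_pos norm_R_pos trace_Pstar_pos by simp
  then have g: "0 < g" "g \<le> 1 / 2" "g \<le> \<rho> * q / (2 * norm R * trace Pstar * (norm A + norm B * (cK + 1) + 1))"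
    unfolding g_def by (simp_all only: min.cobounded1 min.cobounded2)
  have "\<delta> \<le> 1 / cE" "\<delta> \<le> sqrt (g * q / (2 * norm R)) / cE"
    unfolding \<delta>_def by (simp_all add: min_le_iff_disj)
  then have \<delta>: "0 < \<delta>" "\<delta> \<le> \<rho>" "cE * \<delta> \<le> 1" "cE * \<delta> \<le> sqrt (g * q / (2 * norm R))"
    using \<rho>_pos cE g q_pos norm_R_pos unfolding \<delta>_def by (simp_all add: le_divide_eq mult.commute)
  have "(cE * \<delta>) ^ 2 \<le> g * q / (2 * norm R)"
    using power_mono[OF \<delta>(4), of 2] cE \<delta>(1) g q_pos norm_R_pos by simp
  then have "norm R * (cE * \<delta>) ^ 2 / q \<le> norm R * (g * q / (2 * norm R)) / q"
    using norm_R_pos q_pos by (intro divide_right_mono mult_left_mono) simp_all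
  also have "\<dots> = g / 2" using norm_R_pos q_pos by (simp add: field_simps)
  finally have \<delta>_g: "norm R * (cE * \<delta>) ^ 2 / q \<le> g / 2" .
  have "perturbed_step_contracts W \<delta> (1 - g / 2) (2 * trace Pstar * norm R * cE ^ 2 / q)"
    unfolding cE_def cK_def
    by (intro perturbed_step_contracts_if_small W g[unfolded cK_def] \<delta>(2-3)[unfolded cE_def cK_def]
        \<delta>_g[unfolded cE_def cK_def])
  moreover have "0 < 2 * trace Pstar * norm R * cE ^ 2 / q" using trace_Pstar_pos norm_R_pos q_pos cE by simp
  ultimately show thesis using g \<delta>(1) by (intro that) simp_all
qed

text \<open>\<open>dG i\<close>, \<open>K i\<close> and \<open>Pt i\<close> stand for \<open>\<Delta>G\<^sub>i\<close>, \<open>K\<^sub>i\<close> and \<open>P\<^sub>i\<close> of the robust policy iteration; the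
  recursion is only required while the gains stabilise the system.\<close>

definition perturbed_iteration ::
    "(nat \<Rightarrow> real^('n + 'm)^('n + 'm)) \<Rightarrow> (nat \<Rightarrow> real^'n^'m) \<Rightarrow> (nat \<Rightarrow> real^'n^'n) \<Rightarrow> bool" where
  "perturbed_iteration dG K Pt \<longleftrightarrow>
     (\<forall>i\<ge>1. hurwitz (closed_loop (K i)) \<longrightarrow> cost_matrix (K i) (Pt i))
     \<and> (\<forall>i\<ge>1. hurwitz (closed_loop (K i)) \<and> invertible (blk22 (Gtil A B Q R (Pt i) + dG i)) \<longrightarrow>
          K (Suc i) = perturbed_gain (Pt i) (dG i))"

lemma perturbed_iteration_cost:
  "perturbed_iteration dG K Pt \<Longrightarrow> i \<ge> 1 \<Longrightarrow> hurwitz (closed_loop (K i)) \<Longrightarrow> cost_matrix (K i) (Pt i)"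
  unfolding perturbed_iteration_def by blast

lemma perturbed_iteration_update:
  "perturbed_iteration dG K Pt \<Longrightarrow> i \<ge> 1 \<Longrightarrow> hurwitz (closed_loop (K i))
    \<Longrightarrow> invertible (blk22 (Gtil A B Q R (Pt i) + dG i)) \<Longrightarrow> K (Suc i) = perturbed_gain (Pt i) (dG i)"
  unfolding perturbed_iteration_def by blast

lemma perturbed_iteration_invariant:
  assumes step: "perturbed_step_contracts W \<delta> a c" and a: "0 \<le> a"
    and run: "perturbed_iteration dG K Pt"
    and start: "hurwitz (closed_loop (K 1))" "trace (Pt 1 - Pstar) \<le> W"
    and small: "\<And>i. i \<ge> 1 \<Longrightarrow> norm (dG i) < \<delta> \<and> a * W + c * norm (dG i) ^ 2 \<le> W"
    and i: "i \<ge> 1"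
  shows "hurwitz (closed_loop (K i)) \<and> trace (Pt i - Pstar) \<le> W
    \<and> invertible (blk22 (Gtil A B Q R (Pt i) + dG i))
    \<and> trace (Pt (Suc i) - Pstar) \<le> a * trace (Pt i - Pstar) + c * norm (dG i) ^ 2"
  using i
proof (induction i rule: nat_induct_at_least)
  have next_step: "invertible (blk22 (Gtil A B Q R (Pt i) + dG i)) \<and> hurwitz (closed_loop (K (Suc i)))
      \<and> trace (Pt (Suc i) - Pstar) \<le> a * trace (Pt i - Pstar) + c * norm (dG i) ^ 2"
    if i: "i \<ge> 1" and h: "hurwitz (closed_loop (K i))" and V: "trace (Pt i - Pstar) \<le> W" for i
  proof -
    have P: "cost_matrix (K i) (Pt i)" by (rule perturbed_iteration_cost[OF run i h])
    note stable = step[unfolded perturbed_step_contracts_def, rule_format, OF conjI[OF P conjI[OF h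
          conjI[OF V conjunct1[OF small[OF i]]]]]]
    then have K: "K (Suc i) = perturbed_gain (Pt i) (dG i)"
      using perturbed_iteration_update[OF run i h] by blast
    with stable have "cost_matrix (K (Suc i)) (Pt (Suc i))"
      by (intro perturbed_iteration_cost[OF run]) simp_all
    with stable show ?thesis unfolding K by blast
  qed
  {
    case base
    then show ?case using next_step[OF order_refl start] start by simp
  next
    case (Suc i)
    then have h: "hurwitz (closed_loop (K (Suc i)))"
      and rec: "trace (Pt (Suc i) - Pstar) \<le> a * trace (Pt i - Pstar) + c * norm (dG i) ^ 2"
      using next_step by auto
    have "a * trace (Pt i - Pstar) \<le> a * W" using Suc.IH a by (intro mult_left_mono) auto
    then have "trace (Pt (Suc i) - Pstar) \<le> W" using rec small[OF Suc.hyps] by linarith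
    with h show ?case using next_step[of "Suc i"] by simp
  }
qed

lemma perturbed_iteration_converges:
  assumes step: "perturbed_step_contracts W \<delta> a c" and a: "0 \<le> a" "a < 1"
    and run: "perturbed_iteration dG K Pt"
    and start: "hurwitz (closed_loop (K 1))" "trace (Pt 1 - Pstar) \<le> W"
    and small: "\<And>i. i \<ge> 1 \<Longrightarrow> norm (dG i) < \<delta> \<and> c * norm (dG i) ^ 2 \<le> b"
    and b: "0 \<le> b" "b \<le> (1 - a) * W"
  shows "\<forall>i\<ge>1. invertible (blk22 (Gtil A B Q R (Pt i) + dG i)) \<and> hurwitz (closed_loop (K i))
           \<and> norm (Pt i) \<le> norm Pstar + W"
    and "limsup (\<lambda>i. ereal (norm (Pt i - Pstar))) \<le> ereal (b / (1 - a))"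
    and "(\<lambda>i. norm (dG i)) \<longlonglongrightarrow> 0 \<Longrightarrow> (\<lambda>i. norm (Pt i - Pstar)) \<longlonglongrightarrow> 0"
proof -
  define V where "V i = trace (Pt i - Pstar)" for i
  have small': "norm (dG i) < \<delta> \<and> a * W + c * norm (dG i) ^ 2 \<le> W" if "i \<ge> 1" for i
    using small[OF that] b(2) by (simp add: algebra_simps)
  have inv: "hurwitz (closed_loop (K i)) \<and> V i \<le> W \<and> invertible (blk22 (Gtil A B Q R (Pt i) + dG i))
      \<and> V (Suc i) \<le> a * V i + c * norm (dG i) ^ 2" if "i \<ge> 1" for i
    unfolding V_def by (rule perturbed_iteration_invariant[OF step a(1) run start small' that])
  have cost: "cost_matrix (K i) (Pt i)" if "i \<ge> 1" for i
    using perturbed_iteration_cost[OF run that] inv[OF that] by blast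
  have gap: "norm (Pt i - Pstar) \<le> V i" "0 \<le> V i" if "i \<ge> 1" for i
    using norm_cost_gap_le_trace cost_matrix_ge_Pstar[THEN pos_semidef_trace_nonneg] inv[OF that]
      cost[OF that] unfolding V_def by auto
  show "\<forall>i\<ge>1. invertible (blk22 (Gtil A B Q R (Pt i) + dG i)) \<and> hurwitz (closed_loop (K i))
      \<and> norm (Pt i) \<le> norm Pstar + W"
    using inv cost norm_cost_matrix_le unfolding V_def by fastforce
  have "V (Suc i) \<le> a * V i + b" if "i \<ge> 1" for i
    using inv[OF that] small[OF that] by linarith
  then have V: "eventually (\<lambda>i. V i \<le> b / (1 - a) + r) sequentially" if "0 < r" for r
    using a b that by (intro linear_recursion_eventually_le[where v = V and N = 1]) auto
  have "eventually (\<lambda>i. norm (Pt i - Pstar) \<le> b / (1 - a) + r) sequentially" if "0 < r" for r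
    using V[OF that] eventually_ge_at_top[of 1] by eventually_elim (use gap in fastforce)
  then show "limsup (\<lambda>i. ereal (norm (Pt i - Pstar))) \<le> ereal (b / (1 - a))"
    by (rule limsup_le_if_eventually_le)
  assume "(\<lambda>i. norm (dG i)) \<longlonglongrightarrow> 0"
  then have "(\<lambda>i. c * norm (dG i) ^ 2) \<longlonglongrightarrow> 0"
    by (metis tendsto_mult_right_zero tendsto_power zero_power zero_less_numeral)
  with inv a gap(2) have "V \<longlonglongrightarrow> 0" by (intro linear_recursion_tendsto_zero[of 1 V a]) auto
  then show "(\<lambda>i. norm (Pt i - Pstar)) \<longlonglongrightarrow> 0"
    by (rule tendsto_sandwich[rotated 2, OF tendsto_const])
      (auto intro: eventually_sequentiallyI[of 1] simp: gap)
qed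

lemma robust_policy_iteration_from_cost:
  assumes K1: "hurwitz (closed_loop K1)" and P1: "cost_matrix K1 P1" and \<epsilon>: "0 < \<epsilon>"
  obtains \<delta>2 M0 where "0 < \<delta>2" "0 < M0"
    and "\<And>dG K Pt. (SUP i\<in>{1..}. ereal (norm (dG i))) < ereal \<delta>2 \<Longrightarrow> K 1 = K1
      \<Longrightarrow> perturbed_iteration dG K Pt
      \<Longrightarrow> (\<forall>i\<ge>1. invertible (blk22 (Gtil A B Q R (Pt i) + dG i))
              \<and> hurwitz (closed_loop (K i)) \<and> norm (Pt i) < M0)
        \<and> limsup (\<lambda>i. ereal (norm (Pt i - Pstar))) < ereal \<epsilon>
        \<and> ((\<lambda>i. norm (dG i)) \<longlonglongrightarrow> 0 \<longrightarrow> (\<lambda>i. norm (Pt i - Pstar)) \<longlonglongrightarrow> 0)"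
proof -
  define W where "W = trace (P1 - Pstar) + 1"
  have W: "0 < W"
    using pos_semidef_trace_nonneg[OF cost_matrix_ge_Pstar[OF K1 P1]] unfolding W_def by simp
  obtain a c \<delta> where a: "0 \<le> a" "a < 1" and c: "0 < c" and \<delta>: "0 < \<delta>"
    and step: "perturbed_step_contracts W \<delta> a c"
    using perturbed_step[OF less_imp_le[OF W]] by metis
  define b where "b = (1 - a) * min W (\<epsilon> / 2)"
  have b: "0 < b" "b \<le> (1 - a) * W" "b / (1 - a) < \<epsilon>"
    using a W \<epsilon> unfolding b_def by (auto simp: min_def)
  obtain \<delta>2 where \<delta>2: "0 < \<delta>2" and small: "\<And>x. 0 \<le> x \<Longrightarrow> x < \<delta>2 \<Longrightarrow> x < \<delta> \<and> c * x\<^sup>2 \<le> b"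
    using quadratic_small_bound[OF \<delta> c b(1)] by metis
  have M0: "0 < norm Pstar + W + 1" using W norm_ge_zero[of Pstar] by linarith
  show thesis
  proof (rule that[OF \<delta>2 M0], goal_cases)
    case (1 dG K Pt)
    note sup = 1(1) and start = 1(2) and run = 1(3)
    have "cost_matrix K1 (Pt 1)" using perturbed_iteration_cost[OF run, of 1] K1 start by simp
    then have "trace (Pt 1) \<le> trace P1" by (rule cost_matrix_trace_le[OF K1 _ P1])
    then have V1: "trace (Pt 1 - Pstar) \<le> W" unfolding W_def by (simp add: trace_sub)
    have D: "norm (dG i) < \<delta> \<and> c * norm (dG i) ^ 2 \<le> b" if "i \<ge> 1" for i
      using small less_if_SUP_ereal_less[OF sup] that by simp
    have "hurwitz (closed_loop (K 1))" using K1 start by simp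
    note conv = perturbed_iteration_converges[OF step a run this V1 D less_imp_le[OF b(1)] b(2)]
    have "limsup (\<lambda>i. ereal (norm (Pt i - Pstar))) < ereal \<epsilon>"
      using order.strict_trans1[OF conv(2)] b(3) by simp
    with conv(1,3) show ?case by fastforce
  qed
qed

text \<open>If no cost matrix exists for the initial gain, the hypotheses on the iteration cannot hold
  (they provide one at \<open>i = 1\<close>), so any \<open>\<delta>\<^sub>2\<close> and \<open>M\<^sub>0\<close> will do.\<close>

lemma robust_policy_iteration:
  assumes K1: "hurwitz (closed_loop K1)" and \<epsilon>: "0 < \<epsilon>"
  shows "\<exists>\<delta>2>0. \<exists>M0>0. \<forall>dG K Pt.
      (\<forall>i\<ge>1. symmetric_mat (dG i))
      \<and> (SUP i\<in>{1..}. ereal (norm (dG i))) < ereal \<delta>2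
      \<and> K 1 = K1
      \<and> perturbed_iteration dG K Pt
      \<longrightarrow>
      (\<forall>i\<ge>1. invertible (blk22 (Gtil A B Q R (Pt i) + dG i))
              \<and> hurwitz (closed_loop (K i)) \<and> norm (Pt i) < M0)
      \<and> limsup (\<lambda>i. ereal (norm (Pt i - Pstar))) < ereal \<epsilon>
      \<and> ((\<lambda>i. norm (dG i)) \<longlonglongrightarrow> 0 \<longrightarrow> (\<lambda>i. norm (Pt i - Pstar)) \<longlonglongrightarrow> 0)"
proof (cases "\<exists>P1. cost_matrix K1 P1")
  case False
  have "\<not> (K 1 = K1 \<and> perturbed_iteration dG K Pt)" for dG K Pt
    using False K1 unfolding perturbed_iteration_def by (metis order_refl)
  then show ?thesis by (intro exI[of _ 1] conjI) auto
next
  case True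
  then obtain P1 where "cost_matrix K1 P1" ..
  then show ?thesis
  proof (rule robust_policy_iteration_from_cost[OF K1 _ \<epsilon>], goal_cases)
    case (1 \<delta>2 M0)
    then show ?case
      by (intro exI[of _ \<delta>2] exI[of _ M0] conjI[OF 1(1)] conjI[OF 1(2)] allI impI)
        (elim conjE, rule 1(3))
  qed
qed

end

theorem corollary1:
  fixes A :: "real^'n^'n" and B :: "real^'m^'n" and Q :: "real^'n^'n" and R :: "real^'m^'m"
    and Pstar :: "real^'n^'n" and K1 :: "real^'n^'m"
  assumes ctrb: "controllable A B"
    and Q: "pos_def Q" and R: "pos_def R"
    and Pstar: "pos_def Pstar"
    and ARE: "transpose A ** Pstar + Pstar ** A
                - Pstar ** B ** matrix_inv R ** transpose B ** Pstar + Q = 0"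
    and K1: "hurwitz (A - B ** K1)"
  shows "\<forall>\<epsilon>>0. \<exists>\<delta>2>0. \<exists>M0>0.
    \<forall>(dG :: nat \<Rightarrow> real^('n + 'm)^('n + 'm)) (K :: nat \<Rightarrow> real^'n^'m) (Pt :: nat \<Rightarrow> real^'n^'n).
      (\<forall>i\<ge>1. symmetric_mat (dG i))
      \<and> (SUP i\<in>{1..}. ereal (frob (dG i))) < ereal \<delta>2
      \<and> K 1 = K1
      \<and> (\<forall>i\<ge>1. hurwitz (A - B ** K i) \<longrightarrow>
            symmetric_mat (Pt i) \<and>
            transpose (A - B ** K i) ** Pt i + Pt i ** (A - B ** K i)
              + Q + transpose (K i) ** R ** K i = 0)
      \<and> (\<forall>i\<ge>1. hurwitz (A - B ** K i) \<and> invertible (blk22 (Gtil A B Q R (Pt i) + dG i)) \<longrightarrow>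
            K (Suc i) = matrix_inv (blk22 (Gtil A B Q R (Pt i) + dG i))
                          ** blk21 (Gtil A B Q R (Pt i) + dG i))
      \<longrightarrow>
      (\<forall>i\<ge>1. invertible (blk22 (Gtil A B Q R (Pt i) + dG i))
              \<and> hurwitz (A - B ** K i) \<and> frob (Pt i) < M0)
      \<and> limsup (\<lambda>i. ereal (frob (Pt i - Pstar))) < ereal \<epsilon>
      \<and> (((\<lambda>i. frob (dG i)) \<longlonglongrightarrow> 0) \<longrightarrow> ((\<lambda>i. frob (Pt i - Pstar)) \<longlonglongrightarrow> 0))"
proof -
  have Q_sym: "symmetric_mat Q" and R_sym: "symmetric_mat R" and Pstar_sym: "symmetric_mat Pstar"
    and R_pos: "\<And>x. x \<noteq> 0 \<Longrightarrow> 0 < x \<bullet> (R *v x)" and Pstar_pos: "\<And>x. x \<noteq> 0 \<Longrightarrow> 0 < x \<bullet> (Pstar *v x)"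
    using Q R Pstar unfolding pos_def_def by auto
  obtain q where "0 < q" "\<And>x. q * norm x ^ 2 \<le> x \<bullet> (Q *v x)"
    using Q unfolding pos_def_def by (metis coercive_if_pos_definite)
  moreover obtain \<rho> where "0 < \<rho>" "\<And>x. \<rho> * norm x ^ 2 \<le> x \<bullet> (R *v x)"
    using R_pos by (metis coercive_if_pos_definite)
  moreover have "invertible R"
    using R_pos by (intro invertible_if_ker_trivial) (metis inner_zero_right less_irrefl)
  ultimately interpret lqr_coercive A B Q R Pstar q \<rho>
    using Q_sym R_sym Pstar_sym Pstar_pos ARE by unfold_locales auto
  \<comment> \<open>Controllability of \<open>(A, B)\<close> only serves to guarantee that \<open>P\<^sup>*\<close> exists, which is assumed here.\<close>
  show ?thesis
    unfolding frob_eq_norm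
    by (intro allI impI robust_policy_iteration[unfolded closed_loop_def perturbed_iteration_def
          cost_matrix_iff perturbed_gain_def, OF K1])
qed

end
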